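(* Let $A$ be a finite dimensional Hopf algebra over a field $k$, let $n$ be a positive integer, and let $M$ be a finite dimensional $A$-module for which $M\otimes M^*\simeq M^*\otimes M$ as $A$-modules. Then $M$ is projective if and only if $M^{\otimes n}$ is projective.
   Context: $M^*=\mathrm{Hom}_k(M,k)$ is the dual $A$-module with $(a\cdot f)(m)=f(S(a)m)$, $S$ the antipode; tensor products of $A$-modules are $A$-modules via the coproduct. *)

theory Defs
  imports "Jordan_Normal_Form.Matrix"
begin

(* A finite dimensional Hopf algebra A over a field 'k, presented by structure
   constants with respect to a basis e_0,...,e_{d-1}:
     e_i e_j        = \<Sum>_l mu i j l e_l
     1              = \<Sum>_l eta l e_l
     Delta(e_l)     = \<Sum>_{i,j} delta l i j (e_i \<otimes> e_j)
     eps(e_l)       = eps l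
     S(e_i)         = \<Sum>_j antip i j e_j                                        *)
record 'k hopf_data =
  hdim  :: nat
  mu    :: "nat \<Rightarrow> nat \<Rightarrow> nat \<Rightarrow> 'k"
  eta   :: "nat \<Rightarrow> 'k"
  delta :: "nat \<Rightarrow> nat \<Rightarrow> nat \<Rightarrow> 'k"
  eps   :: "nat \<Rightarrow> 'k"
  antip :: "nat \<Rightarrow> nat \<Rightarrow> 'k"

definition kd :: "nat \<Rightarrow> nat \<Rightarrow> 'k::field" where
  "kd a b = (if a = b then 1 else 0)"

definition hopf_algebra :: "'k::field hopf_data \<Rightarrow> bool" where
  "hopf_algebra H \<longleftrightarrow> (let d = hdim H in
     \<comment> \<open>associativity\<close>
     (\<forall>i<d. \<forall>j<d. \<forall>k<d. \<forall>p<d.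
        (\<Sum>l<d. mu H i j l * mu H l k p) = (\<Sum>l<d. mu H j k l * mu H i l p)) \<and>
     \<comment> \<open>unit\<close>
     (\<forall>j<d. \<forall>p<d. (\<Sum>l<d. eta H l * mu H l j p) = kd j p \<and>
                   (\<Sum>l<d. eta H l * mu H j l p) = kd j p) \<and>
     \<comment> \<open>coassociativity\<close>
     (\<forall>l<d. \<forall>a<d. \<forall>b<d. \<forall>c<d.
        (\<Sum>i<d. delta H l i c * delta H i a b) = (\<Sum>j<d. delta H l a j * delta H j b c)) \<and>
     \<comment> \<open>counit\<close>
     (\<forall>l<d. \<forall>j<d. (\<Sum>i<d. eps H i * delta H l i j) = kd l j \<and>
                   (\<Sum>i<d. eps H i * delta H l j i) = kd l j) \<and>
     \<comment> \<open>comultiplication is an algebra map\<close>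
     (\<forall>i<d. \<forall>j<d. \<forall>a<d. \<forall>b<d.
        (\<Sum>l<d. mu H i j l * delta H l a b) =
        (\<Sum>p<d. \<Sum>q<d. \<Sum>r<d. \<Sum>s<d.
            delta H i p q * delta H j r s * mu H p r a * mu H q s b)) \<and>
     (\<forall>a<d. \<forall>b<d. (\<Sum>l<d. eta H l * delta H l a b) = eta H a * eta H b) \<and>
     \<comment> \<open>counit is an algebra map\<close>
     (\<forall>i<d. \<forall>j<d. (\<Sum>l<d. mu H i j l * eps H l) = eps H i * eps H j) \<and>
     (\<Sum>l<d. eta H l * eps H l) = 1 \<and>
     \<comment> \<open>antipode axioms  m(S\<otimes>id)Delta = eta eps = m(id\<otimes>S)Delta\<close>
     (\<forall>l<d. \<forall>q<d.
        (\<Sum>i<d. \<Sum>j<d. \<Sum>p<d. delta H l i j * antip H i p * mu H p j q) = eps H l * eta H q \<and>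
        (\<Sum>i<d. \<Sum>j<d. \<Sum>p<d. delta H l i j * antip H j p * mu H i p q) = eps H l * eta H q))"

(* a finite dimensional A-module: dimension m and the matrices rho(e_i) (m x m) *)
type_synonym 'k amod = "nat \<times> (nat \<Rightarrow> 'k mat)"

definition lc :: "nat \<Rightarrow> nat \<Rightarrow> (nat \<Rightarrow> 'k::field) \<Rightarrow> (nat \<Rightarrow> 'k mat) \<Rightarrow> 'k mat" where
  "lc d m c R = mat m m (\<lambda>(r,s). \<Sum>l<d. c l * R l $$ (r,s))"

definition is_mod :: "'k::field hopf_data \<Rightarrow> 'k amod \<Rightarrow> bool" where
  "is_mod H M \<longleftrightarrow> (let d = hdim H; m = fst M; \<rho> = snd M in
     (\<forall>i<d. \<rho> i \<in> carrier_mat m m) \<and>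
     (\<forall>i<d. \<forall>j<d. \<rho> i * \<rho> j = lc d m (mu H i j) \<rho>) \<and>
     lc d m (eta H) \<rho> = 1\<^sub>m m)"

definition kron :: "'k::field mat \<Rightarrow> 'k mat \<Rightarrow> 'k mat" where
  "kron A B = mat (dim_row A * dim_row B) (dim_col A * dim_col B)
     (\<lambda>(r,s). A $$ (r div dim_row B, s div dim_col B) * B $$ (r mod dim_row B, s mod dim_col B))"

definition tensor :: "'k::field hopf_data \<Rightarrow> 'k amod \<Rightarrow> 'k amod \<Rightarrow> 'k amod" where
  "tensor H M N = (fst M * fst N, (\<lambda>l. mat (fst M * fst N) (fst M * fst N)
     (\<lambda>(r,s). \<Sum>i<hdim H. \<Sum>j<hdim H. delta H l i j * kron (snd M i) (snd N j) $$ (r,s))))"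

(* dual module M^*, (a.f)(x) = f(S(a) x); in the dual basis rho^*(a) = rho(S a)^T *)
definition dual :: "'k::field hopf_data \<Rightarrow> 'k amod \<Rightarrow> 'k amod" where
  "dual H M = (fst M, (\<lambda>i. transpose_mat (lc (hdim H) (fst M) (antip H i) (snd M))))"

(* tensor powers M^{\<otimes> n}, n \<ge> 1 (n = 0 gives the trivial module k) *)
fun tpow :: "'k::field hopf_data \<Rightarrow> 'k amod \<Rightarrow> nat \<Rightarrow> 'k amod" where
  "tpow H M 0 = (1, (\<lambda>i. mat 1 1 (\<lambda>_. eps H i)))"
| "tpow H M (Suc 0) = M"
| "tpow H M (Suc (Suc n)) = tensor H M (tpow H M (Suc n))"

definition hom :: "'k::field hopf_data \<Rightarrow> 'k amod \<Rightarrow> 'k amod \<Rightarrow> 'k mat \<Rightarrow> bool" where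
  "hom H M N T \<longleftrightarrow> T \<in> carrier_mat (fst N) (fst M) \<and>
     (\<forall>i<hdim H. T * snd M i = snd N i * T)"

definition iso :: "'k::field hopf_data \<Rightarrow> 'k amod \<Rightarrow> 'k amod \<Rightarrow> bool" where
  "iso H M N \<longleftrightarrow> (\<exists>T T'. hom H M N T \<and> hom H N M T' \<and>
      T * T' = 1\<^sub>m (fst N) \<and> T' * T = 1\<^sub>m (fst M))"

definition surj_mat :: "'k::field mat \<Rightarrow> bool" where
  "surj_mat T \<longleftrightarrow> (\<forall>v \<in> carrier_vec (dim_row T). \<exists>w \<in> carrier_vec (dim_col T). T *\<^sub>v w = v)"

(* projective: lifting property against surjective homomorphisms
   (in the category of finite dimensional A-modules) *)
definition projective :: "'k::field hopf_data \<Rightarrow> 'k amod \<Rightarrow> bool" where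
  "projective H M \<longleftrightarrow> (\<forall>N P g f. is_mod H N \<and> is_mod H P \<and> hom H N P g \<and> surj_mat g \<and>
      hom H M P f \<longrightarrow> (\<exists>h. hom H M N h \<and> g * h = f))"

end

theory Submission
  imports Defs
begin

text \<open>
  Write \<open>T\<^sub>k\<close> for the \<open>k\<close>-th tensor power of \<open>M\<close>.  If \<open>P\<close> is projective, so is \<open>P \<otimes> Y\<close>
  for every module \<open>Y\<close>: evaluation and coevaluation give an adjunction
  \<open>Hom(P \<otimes> Y, Q) \<cong> Hom(P, Q \<otimes> Y\<^sup>*)\<close>, and \<open>- \<otimes> Y\<^sup>*\<close> preserves surjections.  This gives one
  direction.  For the other, the zigzag identities make \<open>M\<close> a direct summand of \<open>M \<otimes> M\<^sup>* \<otimes> M\<close>,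
  so \<open>T\<^sub>k\<^sub>+\<^sub>1 = M \<otimes> T\<^sub>k\<close> is a direct summand of \<open>M \<otimes> M\<^sup>* \<otimes> T\<^sub>k\<^sub>+\<^sub>1\<close>; the hypothesis
  \<open>M \<otimes> M\<^sup>* \<cong> M\<^sup>* \<otimes> M\<close> lets \<open>M\<^sup>*\<close> commute with \<open>T\<^sub>k\<^sub>+\<^sub>1\<close>, which identifies this module with
  \<open>T\<^sub>k\<^sub>+\<^sub>2 \<otimes> M\<^sup>*\<close>.  So projectivity descends from \<open>T\<^sub>n\<close> to \<open>T\<^sub>1 = M\<close>.  That \<open>M\<^sup>*\<close> is a
  module at all rests on the antipode acting antimultiplicatively, which is derived from the
  Hopf axioms by a convolution argument.
\<close>

section \<open>Kronecker products\<close>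

lemma sum_lessThan_mult_split:
  "(\<Sum>t<a*b. f t) = (\<Sum>u<a. \<Sum>v<b. f (u*b+(v::nat)))"
proof (induction a)
  case 0 then show ?case by simp
next
  case (Suc a)
  have "{..<Suc a * b} = {..<a*b} \<union> {a*b..<a*b+b}" by auto
  then have "(\<Sum>t<Suc a*b. f t) = (\<Sum>t<a*b. f t) + (\<Sum>t\<in>{a*b..<a*b+b}. f t)"
    by (metis finite_atLeastLessThan finite_lessThan ivl_disj_int_one(2) lessThan_atLeast0
        sum.union_disjoint)
  also have "(\<Sum>t\<in>{a*b..<a*b+b}. f t) = (\<Sum>v<b. f (a*b+v))"
    using sum.shift_bounds_nat_ivl[of f 0 "a*b" b] by (simp add: atLeast0LessThan add.commute)
  finally show ?case using Suc by simp
qed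

lemma div_mod_less_mult: "r < a * (b::nat) \<Longrightarrow> r div b < a \<and> r mod b < b"
  by (metis less_mult_imp_div_less mod_less_divisor mult_zero_right neq0_conv not_less0)

lemma mult_add_less_mult: "u < b \<Longrightarrow> v < q \<Longrightarrow> u*q+v < b*(q::nat)"
proof -
  assume "u < b" "v < q"
  then have "u*q+v < Suc u * q" by simp
  also have "\<dots> \<le> b*q" using \<open>u < b\<close> by (intro mult_le_mono1) simp
  finally show ?thesis .
qed

lemma kron_dims[simp]: "dim_row (kron A B) = dim_row A * dim_row B"
  "dim_col (kron A B) = dim_col A * dim_col B"
  by (simp_all add: kron_def)

lemma kron_carrier_mat: "A \<in> carrier_mat a b \<Longrightarrow> B \<in> carrier_mat c d \<Longrightarrow> kron A B \<in> carrier_mat (a*c) (b*d)"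
  by (simp add: kron_def)

lemma kron_index:
  assumes "r < dim_row A * dim_row B" "s < dim_col A * dim_col B"
  shows "kron A B $$ (r,s) = A $$ (r div dim_row B, s div dim_col B) * B $$ (r mod dim_row B, s mod dim_col B)"
  using assms by (simp add: kron_def)
lemma kron_mult_mixed:
  assumes A: "A \<in> carrier_mat a b" and B: "B \<in> carrier_mat b c"
    and C: "C \<in> carrier_mat p q" and D: "D \<in> carrier_mat q r"
  shows "kron A C * kron B D = kron (A*B) (C*D)"
proof (rule eq_matI)
  fix i j assume i: "i < dim_row (kron (A*B) (C*D))" and j: "j < dim_col (kron (A*B) (C*D))"
  have i': "i < a*p" and j': "j < c*r" using i j A B C D by auto
  have di: "i div p < a" "i mod p < p" using div_mod_less_mult[OF i'] by auto
  have dj: "j div r < c" "j mod r < r" using div_mod_less_mult[OF j'] by auto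
  have "(kron A C * kron B D) $$ (i,j) = (\<Sum>t<b*q. kron A C $$ (i,t) * kron B D $$ (t,j))"
    using i' j' A B C D by (simp add: scalar_prod_def atLeast0LessThan)
  also have "\<dots> = (\<Sum>u<b. \<Sum>v<q. kron A C $$ (i,u*q+v) * kron B D $$ (u*q+v,j))"
    by (rule sum_lessThan_mult_split)
  also have "\<dots> = (\<Sum>u<b. \<Sum>v<q. (A $$ (i div p, u) * B $$ (u, j div r)) * (C $$ (i mod p, v) * D $$ (v, j mod r)))"
  proof (intro sum.cong refl)
    fix u v assume u: "u \<in> {..<b}" and v: "v \<in> {..<q}"
    have uv: "u*q+v < b*q" using u v by (simp add: mult_add_less_mult)
    show "kron A C $$ (i,u*q+v) * kron B D $$ (u*q+v,j) = (A $$ (i div p, u) * B $$ (u, j div r)) * (C $$ (i mod p, v) * D $$ (v, j mod r))"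
      using A B C D i' j' uv u v by (simp add: kron_index)
  qed
  also have "\<dots> = (\<Sum>u<b. A $$ (i div p, u) * B $$ (u, j div r)) * (\<Sum>v<q. C $$ (i mod p, v) * D $$ (v, j mod r))"
    by (simp add: sum_product)
  also have "\<dots> = kron (A*B) (C*D) $$ (i,j)"
    using A B C D i' j' di dj by (simp add: kron_index scalar_prod_def atLeast0LessThan)
  finally show "(kron A C * kron B D) $$ (i,j) = kron (A*B) (C*D) $$ (i,j)" .
qed (use A B C D in auto)

lemma div_mod_eq_mod_mult_div: "(i::nat) div c mod b = i mod (b*c) div c"
proof (cases "c = 0")
  case False
  have "i mod (c*b) = c*(i div c mod b) + i mod c" by (rule mod_mult2_eq)
  then show ?thesis using False by (simp add: mult.commute)
qed simp

lemma kron_assoc: "kron (kron A B) C = kron A (kron B C)"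
proof (rule eq_matI)
  fix i j assume i: "i < dim_row (kron A (kron B C))" and j: "j < dim_col (kron A (kron B C))"
  let ?a = "dim_row A" and ?b = "dim_row B" and ?c = "dim_row C"
  let ?a' = "dim_col A" and ?b' = "dim_col B" and ?c' = "dim_col C"
  have i1: "i < ?a * (?b * ?c)" and j1: "j < ?a' * (?b' * ?c')" using i j by auto
  then have i2: "i < (?a * ?b) * ?c" and j2: "j < (?a' * ?b') * ?c'" by (simp_all add: mult.assoc)
  have "i div ?c < ?a * ?b" "j div ?c' < ?a' * ?b'"
    "i mod (?b*?c) < ?b * ?c" "j mod (?b'*?c') < ?b' * ?c'"
    using div_mod_less_mult[OF i2] div_mod_less_mult[OF j2]
      div_mod_less_mult[OF i1] div_mod_less_mult[OF j1] by auto
  moreover note div_mult2_eq[of i ?c ?b] div_mult2_eq[of j ?c' ?b']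
    div_mod_eq_mod_mult_div[of i ?c ?b] div_mod_eq_mod_mult_div[of j ?c' ?b']
    mod_mod_cancel[of ?c "?b*?c" i] mod_mod_cancel[of ?c' "?b'*?c'" j]
  ultimately show "kron (kron A B) C $$ (i,j) = kron A (kron B C) $$ (i,j)"
    using i1 j1 i2 j2 by (simp add: kron_index mult.assoc mult.commute[of ?c ?b] mult.commute[of ?c' ?b'])
qed (simp_all add: mult.assoc)

lemma kron_one_mat: "kron (1\<^sub>m a) (1\<^sub>m b) = (1\<^sub>m (a*b) :: 'k::field mat)"
proof (rule eq_matI)
  fix i j assume "i < dim_row (1\<^sub>m (a*b) :: 'k mat)" and "j < dim_col (1\<^sub>m (a*b) :: 'k mat)"
  then have i: "i < a*b" and j: "j < a*b" by auto
  have "(i div b = j div b \<and> i mod b = j mod b) \<longleftrightarrow> i = j"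
    by (metis div_mult_mod_eq)
  then show "kron (1\<^sub>m a) (1\<^sub>m b) $$ (i,j) = (1\<^sub>m (a*b) :: 'k mat) $$ (i,j)"
    using i j div_mod_less_mult[OF i] div_mod_less_mult[OF j] by (auto simp: kron_index)
qed auto

lemma kron_one_1_right: "kron A (1\<^sub>m 1) = A"
  by (rule eq_matI) (auto simp: kron_index)

section \<open>Linear combinations of matrices\<close>

definition lincomb_mat :: "'a set \<Rightarrow> ('a \<Rightarrow> 'k::field) \<Rightarrow> ('a \<Rightarrow> 'k mat) \<Rightarrow> nat \<Rightarrow> nat \<Rightarrow> 'k mat" where
  "lincomb_mat X c K a b = mat a b (\<lambda>(r,s). \<Sum>x\<in>X. c x * K x $$ (r,s))"

lemma lincomb_mat_carrier[simp]: "lincomb_mat X c K a b \<in> carrier_mat a b"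
  by (simp add: lincomb_mat_def)
lemma lincomb_mat_dims[simp]: "dim_row (lincomb_mat X c K a b) = a" "dim_col (lincomb_mat X c K a b) = b"
  by (simp_all add: lincomb_mat_def)
lemma lincomb_mat_index: "r < a \<Longrightarrow> s < b \<Longrightarrow> lincomb_mat X c K a b $$ (r,s) = (\<Sum>x\<in>X. c x * K x $$ (r,s))"
  by (simp add: lincomb_mat_def)

lemma lincomb_mat_cong:
  assumes "\<And>x. x \<in> X \<Longrightarrow> K x = K' x"
  shows "lincomb_mat X c K a b = lincomb_mat X c K' a b"
  by (rule eq_matI) (auto simp: lincomb_mat_index assms intro!: sum.cong)

lemma mult_lincomb_mat:
  assumes K: "\<And>x. x \<in> X \<Longrightarrow> K x \<in> carrier_mat a b" and A: "A \<in> carrier_mat p a"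
  shows "A * lincomb_mat X c K a b = lincomb_mat X c (\<lambda>x. A * K x) p b"
proof (rule eq_matI)
  fix r s assume r: "r < dim_row (lincomb_mat X c (\<lambda>x. A * K x) p b)" and s: "s < dim_col (lincomb_mat X c (\<lambda>x. A * K x) p b)"
  then have r': "r < p" and s': "s < b" by auto
  have "(A * lincomb_mat X c K a b) $$ (r,s) = (\<Sum>t<a. A $$ (r,t) * (\<Sum>x\<in>X. c x * K x $$ (t,s)))"
    using A r' s' by (simp add: scalar_prod_def atLeast0LessThan lincomb_mat_index)
  also have "\<dots> = (\<Sum>x\<in>X. c x * (\<Sum>t<a. A $$ (r,t) * K x $$ (t,s)))"
    by (simp add: sum_distrib_left sum_distrib_right sum.swap[of _ X] mult.left_commute)
  also have "\<dots> = (\<Sum>x\<in>X. c x * (A * K x) $$ (r,s))"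
  proof (rule sum.cong[OF refl])
    fix x assume x: "x \<in> X"
    from K[OF x] A r' s' show "c x * (\<Sum>t<a. A $$ (r,t) * K x $$ (t,s)) = c x * (A * K x) $$ (r,s)"
      by (simp add: scalar_prod_def atLeast0LessThan)
  qed
  also have "\<dots> = lincomb_mat X c (\<lambda>x. A * K x) p b $$ (r,s)"
    using r' s' by (simp add: lincomb_mat_index)
  finally show "(A * lincomb_mat X c K a b) $$ (r,s) = lincomb_mat X c (\<lambda>x. A * K x) p b $$ (r,s)" .
qed (use A in auto)

lemma lincomb_mat_mult:
  assumes K: "\<And>x. x \<in> X \<Longrightarrow> K x \<in> carrier_mat a b" and B: "B \<in> carrier_mat b q"
  shows "lincomb_mat X c K a b * B = lincomb_mat X c (\<lambda>x. K x * B) a q"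
proof (rule eq_matI)
  fix r s assume r: "r < dim_row (lincomb_mat X c (\<lambda>x. K x * B) a q)" and s: "s < dim_col (lincomb_mat X c (\<lambda>x. K x * B) a q)"
  then have r': "r < a" and s': "s < q" by auto
  have "(lincomb_mat X c K a b * B) $$ (r,s) = (\<Sum>t<b. (\<Sum>x\<in>X. c x * K x $$ (r,t)) * B $$ (t,s))"
    using B r' s' by (simp add: scalar_prod_def atLeast0LessThan lincomb_mat_index)
  also have "\<dots> = (\<Sum>x\<in>X. c x * (\<Sum>t<b. K x $$ (r,t) * B $$ (t,s)))"
    by (simp add: sum_distrib_left sum_distrib_right sum.swap[of _ X] mult.assoc)
  also have "\<dots> = (\<Sum>x\<in>X. c x * (K x * B) $$ (r,s))"
  proof (rule sum.cong[OF refl])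
    fix x assume x: "x \<in> X"
    from K[OF x] B r' s' show "c x * (\<Sum>t<b. K x $$ (r,t) * B $$ (t,s)) = c x * (K x * B) $$ (r,s)"
      by (simp add: scalar_prod_def atLeast0LessThan)
  qed
  also have "\<dots> = lincomb_mat X c (\<lambda>x. K x * B) a q $$ (r,s)"
    using r' s' by (simp add: lincomb_mat_index)
  finally show "(lincomb_mat X c K a b * B) $$ (r,s) = lincomb_mat X c (\<lambda>x. K x * B) a q $$ (r,s)" .
qed (use B in auto)


lemma lincomb_mat_coeff_cong: "(\<And>x. x \<in> X \<Longrightarrow> c x = c' x) \<Longrightarrow> lincomb_mat X c K a b = lincomb_mat X c' K a b"
  by (rule eq_matI) (auto simp: lincomb_mat_index intro!: sum.cong)

lemma lincomb_mat_smult: assumes "\<And>x. x \<in> X \<Longrightarrow> K x \<in> carrier_mat a b"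
  shows "lincomb_mat X c (\<lambda>x. k \<cdot>\<^sub>m K x) a b = k \<cdot>\<^sub>m lincomb_mat X c K a b"
proof (rule eq_matI)
  fix r s assume "r < dim_row (k \<cdot>\<^sub>m lincomb_mat X c K a b)" "s < dim_col (k \<cdot>\<^sub>m lincomb_mat X c K a b)"
  then have rs: "r < a" "s < b" by auto
  have "lincomb_mat X c (\<lambda>x. k \<cdot>\<^sub>m K x) a b $$ (r,s) = (\<Sum>x\<in>X. c x * (k * K x $$ (r,s)))"
    using rs
  proof (simp add: lincomb_mat_index, intro sum.cong refl)
    fix x assume "x \<in> X"
    show "c x * (k \<cdot>\<^sub>m K x) $$ (r,s) = c x * (k * K x $$ (r,s))" using assms[OF \<open>x \<in> X\<close>] rs by auto
  qed
  then show "lincomb_mat X c (\<lambda>x. k \<cdot>\<^sub>m K x) a b $$ (r,s) = (k \<cdot>\<^sub>m lincomb_mat X c K a b) $$ (r,s)"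
    using rs by (simp add: lincomb_mat_index sum_distrib_left mult.left_commute)
qed auto

lemma lincomb_mat_coeff_smult: "lincomb_mat X (\<lambda>x. k * c x) K a b = k \<cdot>\<^sub>m lincomb_mat X c K a b"
  by (rule eq_matI) (auto simp: lincomb_mat_index sum_distrib_left mult.assoc intro!: sum.cong)

lemma lincomb_mat_lincomb:
  shows "lincomb_mat X c (\<lambda>x. lincomb_mat Y (d x) K a b) a b = lincomb_mat Y (\<lambda>y. \<Sum>x\<in>X. c x * d x y) K a b"
proof (rule eq_matI)
  fix r s assume "r < dim_row (lincomb_mat Y (\<lambda>y. \<Sum>x\<in>X. c x * d x y) K a b)" "s < dim_col (lincomb_mat Y (\<lambda>y. \<Sum>x\<in>X. c x * d x y) K a b)"
  then have rs: "r < a" "s < b" by auto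
  have "lincomb_mat X c (\<lambda>x. lincomb_mat Y (d x) K a b) a b $$ (r,s) = (\<Sum>x\<in>X. c x * (\<Sum>y\<in>Y. d x y * K y $$ (r,s)))"
    using rs by (simp add: lincomb_mat_index)
  also have "\<dots> = (\<Sum>x\<in>X. \<Sum>y\<in>Y. c x * d x y * K y $$ (r,s))"
    by (simp add: sum_distrib_left mult.assoc)
  also have "\<dots> = (\<Sum>y\<in>Y. \<Sum>x\<in>X. c x * d x y * K y $$ (r,s))"
    by (rule sum.swap)
  also have "\<dots> = lincomb_mat Y (\<lambda>y. \<Sum>x\<in>X. c x * d x y) K a b $$ (r,s)"
    using rs by (simp add: lincomb_mat_index sum_distrib_right)
  finally show "lincomb_mat X c (\<lambda>x. lincomb_mat Y (d x) K a b) a b $$ (r,s) = lincomb_mat Y (\<lambda>y. \<Sum>x\<in>X. c x * d x y) K a b $$ (r,s)" .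
qed auto

lemma lincomb_mat_Times:
  shows "lincomb_mat X c (\<lambda>x. lincomb_mat Y (d x) (K x) a b) a b = lincomb_mat (X \<times> Y) (\<lambda>(x,y). c x * d x y) (\<lambda>(x,y). K x y) a b"
proof (rule eq_matI)
  fix r s assume "r < dim_row (lincomb_mat (X \<times> Y) (\<lambda>(x,y). c x * d x y) (\<lambda>(x,y). K x y) a b)"
     "s < dim_col (lincomb_mat (X \<times> Y) (\<lambda>(x,y). c x * d x y) (\<lambda>(x,y). K x y) a b)"
  then have rs: "r < a" "s < b" by auto
  have "lincomb_mat X c (\<lambda>x. lincomb_mat Y (d x) (K x) a b) a b $$ (r,s) = (\<Sum>x\<in>X. \<Sum>y\<in>Y. c x * d x y * K x y $$ (r,s))"
    using rs by (simp add: lincomb_mat_index sum_distrib_left mult.assoc)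
  also have "\<dots> = lincomb_mat (X \<times> Y) (\<lambda>(x,y). c x * d x y) (\<lambda>(x,y). K x y) a b $$ (r,s)"
    using rs by (simp add: lincomb_mat_index sum.cartesian_product case_prod_beta)
  finally show "lincomb_mat X c (\<lambda>x. lincomb_mat Y (d x) (K x) a b) a b $$ (r,s) = lincomb_mat (X \<times> Y) (\<lambda>(x,y). c x * d x y) (\<lambda>(x,y). K x y) a b $$ (r,s)" .
qed auto

lemma transpose_lincomb_mat: assumes "\<And>x. x \<in> X \<Longrightarrow> K x \<in> carrier_mat a b"
  shows "transpose_mat (lincomb_mat X c K a b) = lincomb_mat X c (\<lambda>x. transpose_mat (K x)) b a"
proof (rule eq_matI)
  fix r s assume "r < dim_row (lincomb_mat X c (\<lambda>x. transpose_mat (K x)) b a)" "s < dim_col (lincomb_mat X c (\<lambda>x. transpose_mat (K x)) b a)"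
  then have rs: "r < b" "s < a" by auto
  show "transpose_mat (lincomb_mat X c K a b) $$ (r,s) = lincomb_mat X c (\<lambda>x. transpose_mat (K x)) b a $$ (r,s)"
    using rs
  proof (simp add: lincomb_mat_index, intro sum.cong refl)
    fix x assume "x \<in> X"
    show "c x * K x $$ (s, r) = c x * (K x)\<^sup>T $$ (r, s)" using assms[OF \<open>x \<in> X\<close>] rs by auto
  qed
qed auto

lemma lc_eq_lincomb_mat: "lc d m c R = lincomb_mat {..<d} c R m m"
  by (simp add: lc_def lincomb_mat_def)

lemma kron_lincomb_mat_left:
  assumes "\<And>x. x \<in> X \<Longrightarrow> K x \<in> carrier_mat a b"
  shows "kron (lincomb_mat X c K a b) B = lincomb_mat X c (\<lambda>x. kron (K x) B) (a * dim_row B) (b * dim_col B)"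
proof (rule eq_matI)
  fix r s assume r: "r < dim_row (lincomb_mat X c (\<lambda>x. kron (K x) B) (a * dim_row B) (b * dim_col B))"
    and s: "s < dim_col (lincomb_mat X c (\<lambda>x. kron (K x) B) (a * dim_row B) (b * dim_col B))"
  then have r': "r < a * dim_row B" and s': "s < b * dim_col B" by auto
  have d1: "r div dim_row B < a" "s div dim_col B < b" using div_mod_less_mult[OF r'] div_mod_less_mult[OF s'] by auto
  show "kron (lincomb_mat X c K a b) B $$ (r,s) = lincomb_mat X c (\<lambda>x. kron (K x) B) (a * dim_row B) (b * dim_col B) $$ (r,s)"
    using r' s' d1
  proof (simp add: lincomb_mat_index kron_index sum_distrib_right mult.assoc, intro sum.cong refl)
    fix x assume "x \<in> X"
    show "c x * (K x $$ (r div dim_row B, s div dim_col B) * B $$ (r mod dim_row B, s mod dim_col B)) = c x * kron (K x) B $$ (r, s)"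
      using assms(1)[OF \<open>x \<in> X\<close>] r' s' by (auto simp: kron_index)
  qed
qed auto

lemma kron_lincomb_mat_right:
  assumes "\<And>x. x \<in> X \<Longrightarrow> K x \<in> carrier_mat a b"
  shows "kron A (lincomb_mat X c K a b) = lincomb_mat X c (\<lambda>x. kron A (K x)) (dim_row A * a) (dim_col A * b)"
proof (rule eq_matI)
  fix r s assume r: "r < dim_row (lincomb_mat X c (\<lambda>x. kron A (K x)) (dim_row A * a) (dim_col A * b))"
    and s: "s < dim_col (lincomb_mat X c (\<lambda>x. kron A (K x)) (dim_row A * a) (dim_col A * b))"
  then have r': "r < dim_row A * a" and s': "s < dim_col A * b" by auto
  have d1: "r mod a < a" "s mod b < b" using div_mod_less_mult[OF r'] div_mod_less_mult[OF s'] by auto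
  show "kron A (lincomb_mat X c K a b) $$ (r,s) = lincomb_mat X c (\<lambda>x. kron A (K x)) (dim_row A * a) (dim_col A * b) $$ (r,s)"
  proof -
    have "kron A (K x) $$ (r,s) = A $$ (r div a, s div b) * K x $$ (r mod a, s mod b)" if "x \<in> X" for x
      using assms(1)[OF that] r' s' by (auto simp: kron_index)
    then show ?thesis
      using r' s' d1 by (auto simp: lincomb_mat_index kron_index sum_distrib_left mult.left_commute intro!: sum.cong)
  qed
qed auto

lemma lincomb_mat_swap:
  shows "lincomb_mat A c (\<lambda>(r,s). lincomb_mat B e (\<lambda>(p,q). K r s p q) a b) a b = lincomb_mat B e (\<lambda>(p,q). lincomb_mat A c (\<lambda>(r,s). K r s p q) a b) a b"
proof (rule eq_matI)
  fix u v assume "u < dim_row (lincomb_mat B e (\<lambda>(p,q). lincomb_mat A c (\<lambda>(r,s). K r s p q) a b) a b)"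
    "v < dim_col (lincomb_mat B e (\<lambda>(p,q). lincomb_mat A c (\<lambda>(r,s). K r s p q) a b) a b)"
  then have uv: "u < a" "v < b" by auto
  have "lincomb_mat A c (\<lambda>(r,s). lincomb_mat B e (\<lambda>(p,q). K r s p q) a b) a b $$ (u,v) =
        (\<Sum>x\<in>A. \<Sum>y\<in>B. c x * e y * (case x of (r,s) \<Rightarrow> case y of (p,q) \<Rightarrow> K r s p q) $$ (u,v))"
    using uv by (simp add: lincomb_mat_index sum_distrib_left mult.assoc split_def)
  also have "\<dots> = (\<Sum>y\<in>B. \<Sum>x\<in>A. c x * e y * (case x of (r,s) \<Rightarrow> case y of (p,q) \<Rightarrow> K r s p q) $$ (u,v))"
    by (rule sum.swap)
  also have "\<dots> = lincomb_mat B e (\<lambda>(p,q). lincomb_mat A c (\<lambda>(r,s). K r s p q) a b) a b $$ (u,v)"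
    using uv by (simp add: lincomb_mat_index sum_distrib_left mult.assoc mult.left_commute split_def)
  finally show "lincomb_mat A c (\<lambda>(r,s). lincomb_mat B e (\<lambda>(p,q). K r s p q) a b) a b $$ (u,v) = lincomb_mat B e (\<lambda>(p,q). lincomb_mat A c (\<lambda>(r,s). K r s p q) a b) a b $$ (u,v)" .
qed auto

lemma lincomb_mat_smult_const:
  assumes "A \<in> carrier_mat a b"
  shows "lincomb_mat X c (\<lambda>x. k x \<cdot>\<^sub>m A) a b = (\<Sum>x\<in>X. c x * k x) \<cdot>\<^sub>m A"
  by (rule eq_matI) (use assms in \<open>auto simp: lincomb_mat_index sum_distrib_right mult.assoc\<close>)

lemma smult_smult_mat: "a \<cdot>\<^sub>m (b \<cdot>\<^sub>m A) = (a * b :: 'a::comm_ring) \<cdot>\<^sub>m A"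
  by (rule eq_matI) (auto simp: mult.assoc)


lemma kron_lincomb_mat:
  assumes K: "\<And>x. x \<in> X \<Longrightarrow> K x \<in> carrier_mat a b" and L: "\<And>y. y \<in> Y \<Longrightarrow> L y \<in> carrier_mat a' b'"
  shows "kron (lincomb_mat X c K a b) (lincomb_mat Y e L a' b') =
    lincomb_mat (X \<times> Y) (\<lambda>(x,y). c x * e y) (\<lambda>(x,y). kron (K x) (L y)) (a * a') (b * b')"
proof -
  have "kron (lincomb_mat X c K a b) (lincomb_mat Y e L a' b') =
      lincomb_mat X c (\<lambda>x. kron (K x) (lincomb_mat Y e L a' b')) (a * a') (b * b')"
    using kron_lincomb_mat_left[of X K a b c] K by simp
  also have "\<dots> = lincomb_mat X c (\<lambda>x. lincomb_mat Y e (\<lambda>y. kron (K x) (L y)) (a * a') (b * b')) (a * a') (b * b')"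
  proof (rule lincomb_mat_cong)
    fix x assume "x \<in> X"
    then show "kron (K x) (lincomb_mat Y e L a' b') = lincomb_mat Y e (\<lambda>y. kron (K x) (L y)) (a * a') (b * b')"
      using kron_lincomb_mat_right[of Y L a' b' "K x" e] K[OF \<open>x \<in> X\<close>] L by simp
  qed
  also have "\<dots> = lincomb_mat (X \<times> Y) (\<lambda>(x,y). c x * e y) (\<lambda>(x,y). kron (K x) (L y)) (a * a') (b * b')"
    by (rule lincomb_mat_Times)
  finally show ?thesis .
qed

section \<open>Modules, homomorphisms and retracts\<close>

definition wf_amod :: "'k::field hopf_data \<Rightarrow> 'k amod \<Rightarrow> bool" where
  "wf_amod H M \<longleftrightarrow> (\<forall>i<hdim H. snd M i \<in> carrier_mat (fst M) (fst M))"

lemma wf_amodD: "wf_amod H M \<Longrightarrow> i < hdim H \<Longrightarrow> snd M i \<in> carrier_mat (fst M) (fst M)"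
  by (simp add: wf_amod_def)

lemma is_mod_imp_wf_amod: "is_mod H M \<Longrightarrow> wf_amod H M"
  by (simp add: is_mod_def wf_amod_def Let_def)

lemma tensor_fst[simp]: "fst (tensor H M N) = fst M * fst N"
  by (simp add: tensor_def)

lemma tensor_rep_lincomb: "snd (tensor H M N) l =
   lincomb_mat ({..<hdim H} \<times> {..<hdim H}) (\<lambda>(i,j). delta H l i j) (\<lambda>(i,j). kron (snd M i) (snd N j)) (fst M * fst N) (fst M * fst N)"
  unfolding tensor_def lincomb_mat_def by (simp add: sum.cartesian_product case_prod_beta)

lemma wf_amod_tensor[simp]: "wf_amod H (tensor H M N)"
  by (simp add: wf_amod_def tensor_rep_lincomb)

lemma dual_fst[simp]: "fst (dual H M) = fst M"
  by (simp add: dual_def)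

lemma wf_amod_dual[simp]: "wf_amod H (dual H M)"
  by (simp add: wf_amod_def dual_def lc_eq_lincomb_mat)

lemma hom_id: "wf_amod H A \<Longrightarrow> hom H A A (1\<^sub>m (fst A))"
  by (auto simp: hom_def dest: wf_amodD)

lemma hom_comp:
  assumes "hom H A B f" "hom H B C g" "wf_amod H A" "wf_amod H B" "wf_amod H C"
  shows "hom H A C (g * f)"
  unfolding hom_def
proof (intro conjI allI impI)
  have f: "f \<in> carrier_mat (fst B) (fst A)" and g: "g \<in> carrier_mat (fst C) (fst B)"
    using assms by (auto simp: hom_def)
  then show "g * f \<in> carrier_mat (fst C) (fst A)" by auto
  fix i assume i: "i < hdim H"
  have a: "snd A i \<in> carrier_mat (fst A) (fst A)" and b: "snd B i \<in> carrier_mat (fst B) (fst B)"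
    and c: "snd C i \<in> carrier_mat (fst C) (fst C)" using assms i by (auto dest: wf_amodD)
  have "g * f * snd A i = g * (f * snd A i)" using f g a by (simp add: assoc_mult_mat[of _ _ _ _ _ _ "fst A"])
  also have "\<dots> = g * (snd B i * f)" using assms(1) i by (simp add: hom_def)
  also have "\<dots> = g * snd B i * f" using f g b by (simp add: assoc_mult_mat[of _ _ _ _ _ _ "fst A"])
  also have "\<dots> = snd C i * g * f" using assms(2) i by (simp add: hom_def)
  also have "\<dots> = snd C i * (g * f)" using f g c by (simp add: assoc_mult_mat[of _ _ _ _ _ _ "fst A"])
  finally show "g * f * snd A i = snd C i * (g * f)" .
qed

lemma hom_tensor_kron:
  assumes "hom H M M' f" and "hom H N N' g"
    and M: "wf_amod H M" and N: "wf_amod H N" and M': "wf_amod H M'" and N': "wf_amod H N'"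
  shows "hom H (tensor H M N) (tensor H M' N') (kron f g)"
  unfolding hom_def
proof (intro conjI allI impI)
  have fc: "f \<in> carrier_mat (fst M') (fst M)" and gc: "g \<in> carrier_mat (fst N') (fst N)"
    using assms by (auto simp: hom_def)
  then show "kron f g \<in> carrier_mat (fst (tensor H M' N')) (fst (tensor H M N))"
    by (simp add: kron_carrier_mat)
  fix l assume l: "l < hdim H"
  let ?X = "{..<hdim H} \<times> {..<hdim H}"
  have "kron f g * snd (tensor H M N) l = lincomb_mat ?X (\<lambda>(i,j). delta H l i j) (\<lambda>x. kron f g * (case x of (i,j) \<Rightarrow> kron (snd M i) (snd N j))) (fst M' * fst N') (fst M * fst N)"
    unfolding tensor_rep_lincomb
    by (rule mult_lincomb_mat) (use fc gc M N in \<open>auto intro!: kron_carrier_mat dest: wf_amodD\<close>)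
  also have "\<dots> = lincomb_mat ?X (\<lambda>(i,j). delta H l i j) (\<lambda>x. (case x of (i,j) \<Rightarrow> kron (snd M' i) (snd N' j)) * kron f g) (fst M' * fst N') (fst M * fst N)"
  proof (rule lincomb_mat_cong, clarify)
    fix i j assume ij: "i < hdim H" "j < hdim H"
    have "kron f g * kron (snd M i) (snd N j) = kron (f * snd M i) (g * snd N j)"
      by (rule kron_mult_mixed) (use fc gc wf_amodD[OF M ij(1)] wf_amodD[OF N ij(2)] in auto)
    also have "\<dots> = kron (snd M' i * f) (snd N' j * g)"
      using assms(1,2) ij by (simp add: hom_def)
    also have "\<dots> = kron (snd M' i) (snd N' j) * kron f g"
      by (rule kron_mult_mixed[symmetric]) (use fc gc wf_amodD[OF M' ij(1)] wf_amodD[OF N' ij(2)] in auto)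
    finally show "kron f g * kron (snd M i) (snd N j) = kron (snd M' i) (snd N' j) * kron f g" .
  qed
  also have "\<dots> = snd (tensor H M' N') l * kron f g"
    unfolding tensor_rep_lincomb
    by (rule lincomb_mat_mult[symmetric]) (use fc gc M' N' in \<open>auto intro!: kron_carrier_mat dest: wf_amodD\<close>)
  finally show "kron f g * snd (tensor H M N) l = snd (tensor H M' N') l * kron f g" .
qed

definition same_amod :: "'k::field hopf_data \<Rightarrow> 'k amod \<Rightarrow> 'k amod \<Rightarrow> bool" where
  "same_amod H A B \<longleftrightarrow> fst A = fst B \<and> (\<forall>i<hdim H. snd A i = snd B i)"

lemma hom_same_amod_left: "same_amod H A A' \<Longrightarrow> hom H A B T = hom H A' B T"
  by (simp add: same_amod_def hom_def)

lemma hom_same_amod_right: "same_amod H B B' \<Longrightarrow> hom H A B T = hom H A B' T"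
  by (simp add: same_amod_def hom_def)

definition retract :: "'k::field hopf_data \<Rightarrow> 'k amod \<Rightarrow> 'k amod \<Rightarrow> bool" where
  "retract H A B \<longleftrightarrow> (\<exists>i p. hom H A B i \<and> hom H B A p \<and> p * i = 1\<^sub>m (fst A))"

lemma iso_imp_retract: "iso H A B \<Longrightarrow> retract H A B"
  by (auto simp: iso_def retract_def)

lemma iso_sym: "iso H A B \<Longrightarrow> iso H B A"
  by (auto simp: iso_def)

lemma same_amod_imp_iso:
  assumes "same_amod H A B" and A: "wf_amod H A"
  shows "iso H A B"
proof -
  have "hom H A B (1\<^sub>m (fst A))" "hom H B A (1\<^sub>m (fst A))"
    using hom_id[OF A] hom_same_amod_left[OF assms(1)] hom_same_amod_right[OF assms(1)] by simp_all
  moreover have "fst B = fst A" using assms(1) by (simp add: same_amod_def)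
  ultimately show ?thesis
    unfolding iso_def by (intro exI[of _ "1\<^sub>m (fst A)"]) simp
qed

lemma iso_refl: "wf_amod H A \<Longrightarrow> iso H A A"
  by (rule same_amod_imp_iso) (auto simp: same_amod_def)

lemma assoc_mult_mat4:
  assumes "A \<in> carrier_mat n1 n2" "B \<in> carrier_mat n2 n3" "C \<in> carrier_mat n3 n4" "D \<in> carrier_mat n4 n5"
  shows "A * B * (C * D) = A * (B * C) * D"
proof -
  have "A * B * (C * D) = A * B * C * D"
    using assoc_mult_mat[OF mult_carrier_mat[OF assms(1,2)] assms(3,4)] by simp
  also have "A * B * C = A * (B * C)" using assoc_mult_mat[OF assms(1-3)] .
  finally show ?thesis .
qed

lemma left_inverse_comp:
  fixes f f' g g' :: "'a::semiring_1 mat"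
  assumes "f \<in> carrier_mat b a" "f' \<in> carrier_mat a b" "g \<in> carrier_mat c b" "g' \<in> carrier_mat b c"
    and "f' * f = 1\<^sub>m a" "g' * g = 1\<^sub>m b"
  shows "f' * g' * (g * f) = 1\<^sub>m a"
  using assms by (simp add: assoc_mult_mat4[of f' a b g' c g b f a] right_mult_one_mat[of f' a b])

lemma retract_trans[trans]:
  assumes "retract H A B" "retract H B C" "wf_amod H A" "wf_amod H B" "wf_amod H C"
  shows "retract H A C"
proof -
  obtain f f' where f: "hom H A B f" "hom H B A f'" "f' * f = 1\<^sub>m (fst A)"
    using assms(1) by (auto simp: retract_def)
  obtain g g' where g: "hom H B C g" "hom H C B g'" "g' * g = 1\<^sub>m (fst B)"
    using assms(2) by (auto simp: retract_def)
  have "f' * g' * (g * f) = 1\<^sub>m (fst A)"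
    by (rule left_inverse_comp) (use f g in \<open>auto simp: hom_def\<close>)
  with f g assms(3-5) show ?thesis
    unfolding retract_def by (meson hom_comp)
qed

lemma iso_trans[trans]:
  assumes "iso H A B" "iso H B C" "wf_amod H A" "wf_amod H B" "wf_amod H C"
  shows "iso H A C"
proof -
  obtain f f' where f: "hom H A B f" "hom H B A f'" "f * f' = 1\<^sub>m (fst B)" "f' * f = 1\<^sub>m (fst A)"
    using assms(1) by (auto simp: iso_def)
  obtain g g' where g: "hom H B C g" "hom H C B g'" "g * g' = 1\<^sub>m (fst C)" "g' * g = 1\<^sub>m (fst B)"
    using assms(2) by (auto simp: iso_def)
  have "f' * g' * (g * f) = 1\<^sub>m (fst A)" "g * f * (f' * g') = 1\<^sub>m (fst C)"
    by (rule left_inverse_comp; use f g in \<open>auto simp: hom_def\<close>)+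
  with f g assms(3-5) show ?thesis
    unfolding iso_def by (meson hom_comp)
qed

lemma retract_iso_trans[trans]:
  "retract H A B \<Longrightarrow> iso H B C \<Longrightarrow> wf_amod H A \<Longrightarrow> wf_amod H B \<Longrightarrow> wf_amod H C \<Longrightarrow> retract H A C"
  by (rule retract_trans[OF _ iso_imp_retract])

lemma iso_retract_trans[trans]:
  "iso H A B \<Longrightarrow> retract H B C \<Longrightarrow> wf_amod H A \<Longrightarrow> wf_amod H B \<Longrightarrow> wf_amod H C \<Longrightarrow> retract H A C"
  by (rule retract_trans[OF iso_imp_retract])

lemma retract_tensor:
  assumes "retract H A A'" "retract H B B'" "wf_amod H A" "wf_amod H A'" "wf_amod H B" "wf_amod H B'"
  shows "retract H (tensor H A B) (tensor H A' B')"
proof -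
  obtain f f' where f: "hom H A A' f" "hom H A' A f'" "f' * f = 1\<^sub>m (fst A)"
    using assms(1) by (auto simp: retract_def)
  obtain g g' where g: "hom H B B' g" "hom H B' B g'" "g' * g = 1\<^sub>m (fst B)"
    using assms(2) by (auto simp: retract_def)
  have "kron f' g' * kron f g = kron (f' * f) (g' * g)"
    by (rule kron_mult_mixed) (use f g in \<open>auto simp: hom_def\<close>)
  then have "kron f' g' * kron f g = 1\<^sub>m (fst (tensor H A B))"
    using f g by (simp add: kron_one_mat)
  with f g assms(3-6) show ?thesis
    unfolding retract_def by (meson hom_tensor_kron)
qed

lemma iso_tensor:
  assumes "iso H A A'" "iso H B B'" "wf_amod H A" "wf_amod H A'" "wf_amod H B" "wf_amod H B'"
  shows "iso H (tensor H A B) (tensor H A' B')"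
proof -
  obtain f f' where f: "hom H A A' f" "hom H A' A f'" "f * f' = 1\<^sub>m (fst A')" "f' * f = 1\<^sub>m (fst A)"
    using assms(1) by (auto simp: iso_def)
  obtain g g' where g: "hom H B B' g" "hom H B' B g'" "g * g' = 1\<^sub>m (fst B')" "g' * g = 1\<^sub>m (fst B)"
    using assms(2) by (auto simp: iso_def)
  have "kron f g * kron f' g' = kron (f * f') (g * g')" "kron f' g' * kron f g = kron (f' * f) (g' * g)"
    by (rule kron_mult_mixed; use f g in \<open>auto simp: hom_def\<close>)+
  then have "kron f g * kron f' g' = 1\<^sub>m (fst (tensor H A' B'))" "kron f' g' * kron f g = 1\<^sub>m (fst (tensor H A B))"
    using f g by (simp_all add: kron_one_mat)
  with f g assms(3-6) show ?thesis
    unfolding iso_def by (meson hom_tensor_kron)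
qed

lemma projective_retract:
  assumes "retract H A B" "projective H B" "wf_amod H A" "wf_amod H B"
  shows "projective H A"
  unfolding projective_def
proof (intro allI impI, elim conjE)
  fix N Q g f assume N: "is_mod H N" and Q: "is_mod H Q" and g: "hom H N Q g" "surj_mat g"
    and f: "hom H A Q f"
  obtain i p where ip: "hom H A B i" "hom H B A p" "p * i = 1\<^sub>m (fst A)"
    using assms(1) by (auto simp: retract_def)
  have "hom H B Q (f * p)"
    using hom_comp[OF ip(2) f] assms(3,4) Q by (simp add: is_mod_imp_wf_amod)
  then obtain h where h: "hom H B N h" "g * h = f * p"
    using assms(2) N Q g unfolding projective_def by blast
  have "hom H A N (h * i)"
    using hom_comp[OF ip(1) h(1)] assms(3,4) N by (simp add: is_mod_imp_wf_amod)
  moreover have "g * (h * i) = f"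
  proof -
    have c: "g \<in> carrier_mat (fst Q) (fst N)" "h \<in> carrier_mat (fst N) (fst B)"
      "i \<in> carrier_mat (fst B) (fst A)" "p \<in> carrier_mat (fst A) (fst B)" "f \<in> carrier_mat (fst Q) (fst A)"
      using g f h ip by (auto simp: hom_def)
    then have "g * (h * i) = f * p * i" by (simp add: h(2) flip: assoc_mult_mat[of g _ _ h _ i])
    also have "\<dots> = f" using c ip(3) by (simp add: assoc_mult_mat[of f _ _ p _ i])
    finally show ?thesis .
  qed
  ultimately show "\<exists>h. hom H A N h \<and> g * h = f" by blast
qed


section \<open>The antipode on a module and the dual module\<close>

lemma sum_kd_left[simp]:
  assumes "i < n" shows "(\<Sum>x<n. kd i x * f x) = (f i::'k::field)"
proof -
  have "(\<Sum>x<n. kd i x * f x) = (\<Sum>x<n. if x = i then f x else 0)"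
    by (rule sum.cong) (auto simp: kd_def)
  then show ?thesis using assms by simp
qed

lemma sum_kd_right[simp]:
  assumes "i < n" shows "(\<Sum>x<n. kd x i * f x) = (f i::'k::field)"
proof -
  have "(\<Sum>x<n. kd x i * f x) = (\<Sum>x<n. if x = i then f x else 0)"
    by (rule sum.cong) (auto simp: kd_def)
  then show ?thesis using assms by simp
qed

lemma sum_Times_nested: "sum f (A \<times> B) = (\<Sum>a\<in>A. \<Sum>b\<in>B. f (a,b))"
  by (simp add: sum.cartesian_product)

locale hopf =
  fixes H :: "'k::field hopf_data"
  assumes hopf: "hopf_algebra H"
begin

abbreviation "d \<equiv> hdim H"
abbreviation "D \<equiv> {..<hdim H}"
abbreviation "PP \<equiv> {..<hdim H} \<times> {..<hdim H}"

lemmas hopf_unfolded = hopf[unfolded hopf_algebra_def Let_def]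

lemma coassoc: "l < d \<Longrightarrow> a < d \<Longrightarrow> b < d \<Longrightarrow> c < d \<Longrightarrow>
  (\<Sum>i<d. delta H l i c * delta H i a b) = (\<Sum>j<d. delta H l a j * delta H j b c)"
  using hopf_unfolded[THEN conjunct2, THEN conjunct2, THEN conjunct1] by blast
lemma counit_left: "l < d \<Longrightarrow> j < d \<Longrightarrow> (\<Sum>i<d. eps H i * delta H l i j) = kd l j"
  using hopf_unfolded[THEN conjunct2, THEN conjunct2, THEN conjunct2, THEN conjunct1] by blast
lemma counit_right: "l < d \<Longrightarrow> j < d \<Longrightarrow> (\<Sum>i<d. eps H i * delta H l j i) = kd l j"
  using hopf_unfolded[THEN conjunct2, THEN conjunct2, THEN conjunct2, THEN conjunct1] by blast
lemma unit_right: "j < d \<Longrightarrow> p < d \<Longrightarrow> (\<Sum>l<d. eta H l * mu H j l p) = kd j p"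
  using hopf_unfolded[THEN conjunct2, THEN conjunct1] by blast
lemma delta_mult: "i < d \<Longrightarrow> j < d \<Longrightarrow> a < d \<Longrightarrow> b < d \<Longrightarrow>
  (\<Sum>l<d. mu H i j l * delta H l a b) =
  (\<Sum>p<d. \<Sum>q<d. \<Sum>r<d. \<Sum>s<d. delta H i p q * delta H j r s * mu H p r a * mu H q s b)"
  using hopf_unfolded[THEN conjunct2, THEN conjunct2, THEN conjunct2, THEN conjunct2, THEN conjunct1] by blast
lemma delta_unit: "a < d \<Longrightarrow> b < d \<Longrightarrow> (\<Sum>l<d. eta H l * delta H l a b) = eta H a * eta H b"
  using hopf_unfolded[THEN conjunct2, THEN conjunct2, THEN conjunct2, THEN conjunct2, THEN conjunct2, THEN conjunct1] by blast
lemma eps_mult: "i < d \<Longrightarrow> j < d \<Longrightarrow> (\<Sum>l<d. mu H i j l * eps H l) = eps H i * eps H j"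
  using hopf_unfolded[THEN conjunct2, THEN conjunct2, THEN conjunct2, THEN conjunct2, THEN conjunct2, THEN conjunct2, THEN conjunct1] by blast
lemma eps_unit: "(\<Sum>l<d. eta H l * eps H l) = 1"
  using hopf_unfolded[THEN conjunct2, THEN conjunct2, THEN conjunct2, THEN conjunct2, THEN conjunct2, THEN conjunct2, THEN conjunct2, THEN conjunct1] by blast
lemma antipode_left: "l < d \<Longrightarrow> q < d \<Longrightarrow>
  (\<Sum>i<d. \<Sum>j<d. \<Sum>p<d. delta H l i j * antip H i p * mu H p j q) = eps H l * eta H q"
  using hopf_unfolded[THEN conjunct2, THEN conjunct2, THEN conjunct2, THEN conjunct2, THEN conjunct2, THEN conjunct2, THEN conjunct2, THEN conjunct2] by blast
lemma antipode_right: "l < d \<Longrightarrow> q < d \<Longrightarrow>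
  (\<Sum>i<d. \<Sum>j<d. \<Sum>p<d. delta H l i j * antip H j p * mu H i p q) = eps H l * eta H q"
  using hopf_unfolded[THEN conjunct2, THEN conjunct2, THEN conjunct2, THEN conjunct2, THEN conjunct2, THEN conjunct2, THEN conjunct2, THEN conjunct2] by blast

lemma sum_coassoc:
  fixes g :: "nat \<Rightarrow> nat \<Rightarrow> nat \<Rightarrow> 'k"
  assumes i: "i < d"
  shows "(\<Sum>p<d. \<Sum>q<d. delta H i p q * (\<Sum>p'<d. \<Sum>q'<d. delta H p p' q' * g p' q' q)) =
         (\<Sum>p<d. \<Sum>q<d. delta H i p q * (\<Sum>q'<d. \<Sum>q''<d. delta H q q' q'' * g p q' q''))"
proof -
  let ?F = "\<lambda>p q p' q'. delta H i p q * delta H p p' q' * g p' q' q"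
  have "(\<Sum>p<d. \<Sum>q<d. delta H i p q * (\<Sum>p'<d. \<Sum>q'<d. delta H p p' q' * g p' q' q)) =
        (\<Sum>p<d. \<Sum>q<d. \<Sum>p'<d. \<Sum>q'<d. ?F p q p' q')"
    by (simp add: sum_distrib_left mult.assoc)
  also have "\<dots> = (\<Sum>q<d. \<Sum>p<d. \<Sum>p'<d. \<Sum>q'<d. ?F p q p' q')" by (rule sum.swap)
  also have "\<dots> = (\<Sum>q<d. \<Sum>p'<d. \<Sum>p<d. \<Sum>q'<d. ?F p q p' q')" by (rule sum.cong[OF refl sum.swap])
  also have "\<dots> = (\<Sum>q<d. \<Sum>p'<d. \<Sum>q'<d. \<Sum>p<d. ?F p q p' q')"
    by (rule sum.cong[OF refl sum.cong[OF refl sum.swap]])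
  also have "\<dots> = (\<Sum>p'<d. \<Sum>q<d. \<Sum>q'<d. \<Sum>p<d. ?F p q p' q')" by (rule sum.swap)
  also have "\<dots> = (\<Sum>p'<d. \<Sum>q'<d. \<Sum>q<d. \<Sum>p<d. ?F p q p' q')" by (rule sum.cong[OF refl sum.swap])
  also have "\<dots> = (\<Sum>p'<d. \<Sum>q'<d. \<Sum>q<d. (\<Sum>t<d. delta H i p' t * delta H t q' q) * g p' q' q)"
  proof (intro sum.cong refl)
    fix p' q' q assume "p' \<in> D" "q' \<in> D" "q \<in> D"
    then have "(\<Sum>p<d. ?F p q p' q') = (\<Sum>p<d. delta H i p q * delta H p p' q') * g p' q' q"
      by (simp add: sum_distrib_right)
    also have "\<dots> = (\<Sum>t<d. delta H i p' t * delta H t q' q) * g p' q' q"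
      using coassoc[OF i, of p' q' q] \<open>p' \<in> D\<close> \<open>q' \<in> D\<close> \<open>q \<in> D\<close> by simp
    finally show "(\<Sum>p<d. ?F p q p' q') = (\<Sum>t<d. delta H i p' t * delta H t q' q) * g p' q' q" .
  qed
  also have "\<dots> = (\<Sum>p'<d. \<Sum>q'<d. \<Sum>q<d. \<Sum>t<d. delta H i p' t * delta H t q' q * g p' q' q)"
    by (simp add: sum_distrib_right)
  also have "\<dots> = (\<Sum>p'<d. \<Sum>q'<d. \<Sum>t<d. \<Sum>q<d. delta H i p' t * delta H t q' q * g p' q' q)"
    by (rule sum.cong[OF refl sum.cong[OF refl sum.swap]])
  also have "\<dots> = (\<Sum>p'<d. \<Sum>t<d. \<Sum>q'<d. \<Sum>q<d. delta H i p' t * delta H t q' q * g p' q' q)"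
    by (rule sum.cong[OF refl sum.swap])
  also have "\<dots> = (\<Sum>p<d. \<Sum>q<d. delta H i p q * (\<Sum>q'<d. \<Sum>q''<d. delta H q q' q'' * g p q' q''))"
    by (simp add: sum_distrib_left mult.assoc)
  finally show ?thesis .
qed


lemma lincomb_mat_coassoc:
  assumes i: "i < d"
  shows "lincomb_mat PP (\<lambda>(p,q). delta H i p q) (\<lambda>(p,q). lincomb_mat PP (\<lambda>(p',q'). delta H p p' q') (\<lambda>(p',q'). L p' q' q) a b) a b =
         lincomb_mat PP (\<lambda>(p,q). delta H i p q) (\<lambda>(p,q). lincomb_mat PP (\<lambda>(q',q''). delta H q q' q'') (\<lambda>(q',q''). L p q' q'') a b) a b"
  by (rule eq_matI) (simp_all add: lincomb_mat_index sum_Times_nested sum_coassoc[OF i, of "\<lambda>p q r. L p q r $$ _"])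

lemma is_mod_carrier: "is_mod H M \<Longrightarrow> i < d \<Longrightarrow> snd M i \<in> carrier_mat (fst M) (fst M)"
  by (simp add: is_mod_def Let_def)
lemma is_mod_mult: "is_mod H M \<Longrightarrow> i < d \<Longrightarrow> j < d \<Longrightarrow> snd M i * snd M j = lincomb_mat D (mu H i j) (snd M) (fst M) (fst M)"
  by (simp add: is_mod_def Let_def lc_eq_lincomb_mat)
lemma is_mod_unit: "is_mod H M \<Longrightarrow> lincomb_mat D (eta H) (snd M) (fst M) (fst M) = 1\<^sub>m (fst M)"
  by (simp add: is_mod_def Let_def lc_eq_lincomb_mat)

definition ant_rep :: "'k amod \<Rightarrow> nat \<Rightarrow> 'k mat" where
  "ant_rep M l = lincomb_mat D (antip H l) (snd M) (fst M) (fst M)"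

lemma ant_rep_carrier[simp]: "ant_rep M l \<in> carrier_mat (fst M) (fst M)"
  by (simp add: ant_rep_def)

lemma ant_rep_left_inverse:
  assumes M: "is_mod H M" and l: "l < d"
  shows "lincomb_mat PP (\<lambda>(i,j). delta H l i j) (\<lambda>(i,j). ant_rep M i * snd M j) (fst M) (fst M) = eps H l \<cdot>\<^sub>m 1\<^sub>m (fst M)"
proof -
  let ?m = "fst M" and ?\<rho> = "snd M"
  have "lincomb_mat PP (\<lambda>(i,j). delta H l i j) (\<lambda>(i,j). ant_rep M i * ?\<rho> j) ?m ?m =
        lincomb_mat PP (\<lambda>(i,j). delta H l i j) (\<lambda>x. lincomb_mat D (\<lambda>q. \<Sum>p\<in>D. antip H (fst x) p * mu H p (snd x) q) ?\<rho> ?m ?m) ?m ?m"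
  proof (rule lincomb_mat_cong)
    fix x assume x: "x \<in> PP"
    obtain i j where ij: "x = (i,j)" "i < d" "j < d" using x by auto
    have "ant_rep M i * ?\<rho> j = lincomb_mat D (antip H i) (\<lambda>p. ?\<rho> p * ?\<rho> j) ?m ?m"
      unfolding ant_rep_def by (rule lincomb_mat_mult) (use is_mod_carrier[OF M] ij in auto)
    also have "\<dots> = lincomb_mat D (antip H i) (\<lambda>p. lincomb_mat D (mu H p j) ?\<rho> ?m ?m) ?m ?m"
      by (rule lincomb_mat_cong) (use is_mod_mult[OF M] ij in auto)
    also have "\<dots> = lincomb_mat D (\<lambda>q. \<Sum>p\<in>D. antip H i p * mu H p j q) ?\<rho> ?m ?m"
      by (rule lincomb_mat_lincomb)
    finally show "(case x of (i,j) \<Rightarrow> ant_rep M i * ?\<rho> j) = lincomb_mat D (\<lambda>q. \<Sum>p\<in>D. antip H (fst x) p * mu H p (snd x) q) ?\<rho> ?m ?m"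
      using ij by simp
  qed
  also have "\<dots> = lincomb_mat D (\<lambda>q. \<Sum>x\<in>PP. (case x of (i,j) \<Rightarrow> delta H l i j) * (\<Sum>p\<in>D. antip H (fst x) p * mu H p (snd x) q)) ?\<rho> ?m ?m"
    by (rule lincomb_mat_lincomb)
  also have "\<dots> = lincomb_mat D (\<lambda>q. eps H l * eta H q) ?\<rho> ?m ?m"
  proof (rule lincomb_mat_coeff_cong)
    fix q assume q: "q \<in> D"
    have "(\<Sum>x\<in>PP. (case x of (i,j) \<Rightarrow> delta H l i j) * (\<Sum>p\<in>D. antip H (fst x) p * mu H p (snd x) q)) =
          (\<Sum>i<d. \<Sum>j<d. \<Sum>p<d. delta H l i j * antip H i p * mu H p j q)"
      by (simp add: sum_Times_nested sum_distrib_left mult.assoc)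
    also have "\<dots> = eps H l * eta H q" using antipode_left[OF l] q by simp
    finally show "(\<Sum>x\<in>PP. (case x of (i,j) \<Rightarrow> delta H l i j) * (\<Sum>p\<in>D. antip H (fst x) p * mu H p (snd x) q)) = eps H l * eta H q" .
  qed
  also have "\<dots> = eps H l \<cdot>\<^sub>m 1\<^sub>m ?m"
    using is_mod_unit[OF M] by (simp add: lincomb_mat_coeff_smult)
  finally show ?thesis .
qed

lemma ant_rep_right_inverse:
  assumes M: "is_mod H M" and l: "l < d"
  shows "lincomb_mat PP (\<lambda>(i,j). delta H l i j) (\<lambda>(i,j). snd M i * ant_rep M j) (fst M) (fst M) = eps H l \<cdot>\<^sub>m 1\<^sub>m (fst M)"
proof -
  let ?m = "fst M" and ?\<rho> = "snd M"
  have "lincomb_mat PP (\<lambda>(i,j). delta H l i j) (\<lambda>(i,j). ?\<rho> i * ant_rep M j) ?m ?m =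
        lincomb_mat PP (\<lambda>(i,j). delta H l i j) (\<lambda>x. lincomb_mat D (\<lambda>q. \<Sum>p\<in>D. antip H (snd x) p * mu H (fst x) p q) ?\<rho> ?m ?m) ?m ?m"
  proof (rule lincomb_mat_cong)
    fix x assume x: "x \<in> PP"
    obtain i j where ij: "x = (i,j)" "i < d" "j < d" using x by auto
    have "?\<rho> i * ant_rep M j = lincomb_mat D (antip H j) (\<lambda>p. ?\<rho> i * ?\<rho> p) ?m ?m"
      unfolding ant_rep_def by (rule mult_lincomb_mat) (use is_mod_carrier[OF M] ij in auto)
    also have "\<dots> = lincomb_mat D (antip H j) (\<lambda>p. lincomb_mat D (mu H i p) ?\<rho> ?m ?m) ?m ?m"
      by (rule lincomb_mat_cong) (use is_mod_mult[OF M] ij in auto)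
    also have "\<dots> = lincomb_mat D (\<lambda>q. \<Sum>p\<in>D. antip H j p * mu H i p q) ?\<rho> ?m ?m"
      by (rule lincomb_mat_lincomb)
    finally show "(case x of (i,j) \<Rightarrow> ?\<rho> i * ant_rep M j) = lincomb_mat D (\<lambda>q. \<Sum>p\<in>D. antip H (snd x) p * mu H (fst x) p q) ?\<rho> ?m ?m"
      using ij by simp
  qed
  also have "\<dots> = lincomb_mat D (\<lambda>q. \<Sum>x\<in>PP. (case x of (i,j) \<Rightarrow> delta H l i j) * (\<Sum>p\<in>D. antip H (snd x) p * mu H (fst x) p q)) ?\<rho> ?m ?m"
    by (rule lincomb_mat_lincomb)
  also have "\<dots> = lincomb_mat D (\<lambda>q. eps H l * eta H q) ?\<rho> ?m ?m"
  proof (rule lincomb_mat_coeff_cong)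
    fix q assume q: "q \<in> D"
    have "(\<Sum>x\<in>PP. (case x of (i,j) \<Rightarrow> delta H l i j) * (\<Sum>p\<in>D. antip H (snd x) p * mu H (fst x) p q)) =
          (\<Sum>i<d. \<Sum>j<d. \<Sum>p<d. delta H l i j * antip H j p * mu H i p q)"
      by (simp add: sum_Times_nested sum_distrib_left mult.assoc)
    also have "\<dots> = eps H l * eta H q" using antipode_right[OF l] q by simp
    finally show "(\<Sum>x\<in>PP. (case x of (i,j) \<Rightarrow> delta H l i j) * (\<Sum>p\<in>D. antip H (snd x) p * mu H (fst x) p q)) = eps H l * eta H q" .
  qed
  also have "\<dots> = eps H l \<cdot>\<^sub>m 1\<^sub>m ?m"
    using is_mod_unit[OF M] by (simp add: lincomb_mat_coeff_smult)
  finally show ?thesis .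
qed

text \<open>
  \<open>conv\<close> is the convolution product on families indexed by pairs of basis elements, i.e. on
  linear maps \<open>A \<otimes> A \<rightarrow> End(M)\<close> for the tensor-product coalgebra \<open>A \<otimes> A\<close>, and \<open>conv_unit\<close>
  is its unit.  The families \<open>(p,r) \<mapsto> \<rho>(S(e\<^sub>p e\<^sub>r))\<close> and \<open>(p,r) \<mapsto> \<rho>(S e\<^sub>r) \<rho>(S e\<^sub>p)\<close> are a
  left and a right inverse of \<open>(p,r) \<mapsto> \<rho>(e\<^sub>p) \<rho>(e\<^sub>r)\<close>, so they coincide by associativity.
\<close>

definition conv :: "nat \<Rightarrow> (nat \<Rightarrow> nat \<Rightarrow> 'k mat) \<Rightarrow> (nat \<Rightarrow> nat \<Rightarrow> 'k mat) \<Rightarrow> nat \<Rightarrow> nat \<Rightarrow> 'k mat" where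
  "conv m X Y i j = lincomb_mat PP (\<lambda>(p,q). delta H i p q) (\<lambda>(p,q). lincomb_mat PP (\<lambda>(r,s). delta H j r s) (\<lambda>(r,s). X p r * Y q s) m m) m m"

definition sq_family :: "nat \<Rightarrow> (nat \<Rightarrow> nat \<Rightarrow> 'k mat) \<Rightarrow> bool" where
  "sq_family m X \<longleftrightarrow> (\<forall>p<d. \<forall>r<d. X p r \<in> carrier_mat m m)"

lemma sq_familyD: "sq_family m X \<Longrightarrow> p < d \<Longrightarrow> r < d \<Longrightarrow> X p r \<in> carrier_mat m m"
  by (simp add: sq_family_def)

lemma conv_mult:
  assumes X: "sq_family m X" and Y: "sq_family m Y" and Z: "Z \<in> carrier_mat m m"
  shows "conv m X Y p r * Z = lincomb_mat PP (\<lambda>(p',q'). delta H p p' q') (\<lambda>(p',q'). lincomb_mat PP (\<lambda>(r',s'). delta H r r' s') (\<lambda>(r',s'). X p' r' * (Y q' s' * Z)) m m) m m"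
proof -
  have "conv m X Y p r * Z = lincomb_mat PP (\<lambda>(p',q'). delta H p p' q') (\<lambda>x. (case x of (p',q') \<Rightarrow> lincomb_mat PP (\<lambda>(r',s'). delta H r r' s') (\<lambda>(r',s'). X p' r' * Y q' s') m m) * Z) m m"
    unfolding conv_def by (rule lincomb_mat_mult) (use Z in auto)
  also have "\<dots> = lincomb_mat PP (\<lambda>(p',q'). delta H p p' q') (\<lambda>(p',q'). lincomb_mat PP (\<lambda>(r',s'). delta H r r' s') (\<lambda>(r',s'). X p' r' * (Y q' s' * Z)) m m) m m"
  proof (rule lincomb_mat_cong)
    fix x assume x: "x \<in> PP"
    obtain p' q' where pq: "x = (p',q')" "p' < d" "q' < d" using x by auto
    have "lincomb_mat PP (\<lambda>(r',s'). delta H r r' s') (\<lambda>(r',s'). X p' r' * Y q' s') m m * Z =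
          lincomb_mat PP (\<lambda>(r',s'). delta H r r' s') (\<lambda>y. (case y of (r',s') \<Rightarrow> X p' r' * Y q' s') * Z) m m"
      by (rule lincomb_mat_mult) (use Z sq_familyD[OF X] sq_familyD[OF Y] pq in \<open>auto intro!: mult_carrier_mat\<close>)
    also have "\<dots> = lincomb_mat PP (\<lambda>(r',s'). delta H r r' s') (\<lambda>(r',s'). X p' r' * (Y q' s' * Z)) m m"
    proof (rule lincomb_mat_cong)
      fix y assume y: "y \<in> PP"
      obtain r' s' where rs: "y = (r',s')" "r' < d" "s' < d" using y by auto
      show "(case y of (r',s') \<Rightarrow> X p' r' * Y q' s') * Z = (case y of (r',s') \<Rightarrow> X p' r' * (Y q' s' * Z))"
        using assoc_mult_mat[OF sq_familyD[OF X pq(2) rs(2)] sq_familyD[OF Y pq(3) rs(3)] Z] rs by simp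
    qed
    finally show "(case x of (p',q') \<Rightarrow> lincomb_mat PP (\<lambda>(r',s'). delta H r r' s') (\<lambda>(r',s'). X p' r' * Y q' s') m m) * Z =
       (case x of (p',q') \<Rightarrow> lincomb_mat PP (\<lambda>(r',s'). delta H r r' s') (\<lambda>(r',s'). X p' r' * (Y q' s' * Z)) m m)"
      using pq by simp
  qed
  finally show ?thesis .
qed

lemma mult_conv:
  assumes Y: "sq_family m Y" and Z: "sq_family m Z" and A: "A \<in> carrier_mat m m"
  shows "A * conv m Y Z q s = lincomb_mat PP (\<lambda>(q',q''). delta H q q' q'') (\<lambda>(q',q''). lincomb_mat PP (\<lambda>(s',s''). delta H s s' s'') (\<lambda>(s',s''). A * (Y q' s' * Z q'' s'')) m m) m m"
proof -
  have "A * conv m Y Z q s = lincomb_mat PP (\<lambda>(q',q''). delta H q q' q'') (\<lambda>x. A * (case x of (q',q'') \<Rightarrow> lincomb_mat PP (\<lambda>(s',s''). delta H s s' s'') (\<lambda>(s',s''). Y q' s' * Z q'' s'') m m)) m m"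
    unfolding conv_def by (rule mult_lincomb_mat) (use A in auto)
  also have "\<dots> = lincomb_mat PP (\<lambda>(q',q''). delta H q q' q'') (\<lambda>(q',q''). lincomb_mat PP (\<lambda>(s',s''). delta H s s' s'') (\<lambda>(s',s''). A * (Y q' s' * Z q'' s'')) m m) m m"
  proof (rule lincomb_mat_cong)
    fix x assume x: "x \<in> PP"
    obtain q' q'' where pq: "x = (q',q'')" "q' < d" "q'' < d" using x by auto
    have "A * lincomb_mat PP (\<lambda>(s',s''). delta H s s' s'') (\<lambda>(s',s''). Y q' s' * Z q'' s'') m m =
          lincomb_mat PP (\<lambda>(s',s''). delta H s s' s'') (\<lambda>y. A * (case y of (s',s'') \<Rightarrow> Y q' s' * Z q'' s'')) m m"
      by (rule mult_lincomb_mat) (use A sq_familyD[OF Y] sq_familyD[OF Z] pq in \<open>auto intro!: mult_carrier_mat\<close>)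
    also have "\<dots> = lincomb_mat PP (\<lambda>(s',s''). delta H s s' s'') (\<lambda>(s',s''). A * (Y q' s' * Z q'' s'')) m m"
      by (rule lincomb_mat_cong) auto
    finally show "A * (case x of (q',q'') \<Rightarrow> lincomb_mat PP (\<lambda>(s',s''). delta H s s' s'') (\<lambda>(s',s''). Y q' s' * Z q'' s'') m m) =
       (case x of (q',q'') \<Rightarrow> lincomb_mat PP (\<lambda>(s',s''). delta H s s' s'') (\<lambda>(s',s''). A * (Y q' s' * Z q'' s'')) m m)"
      using pq by simp
  qed
  finally show ?thesis .
qed


lemma conv_conv_left:
  assumes X: "sq_family m X" and Y: "sq_family m Y" and Z: "sq_family m Z"
  shows "conv m (conv m X Y) Z i j = lincomb_mat PP (\<lambda>(p,q). delta H i p q) (\<lambda>(p,q). lincomb_mat PP (\<lambda>(r,s). delta H j r s)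
     (\<lambda>(r,s). lincomb_mat PP (\<lambda>(p',q'). delta H p p' q') (\<lambda>(p',q'). lincomb_mat PP (\<lambda>(r',s'). delta H r r' s')
       (\<lambda>(r',s'). X p' r' * (Y q' s' * Z q s)) m m) m m) m m) m m"
  unfolding conv_def[of m "conv m X Y"]
  by (auto intro!: lincomb_mat_cong simp: conv_mult[OF X Y] sq_familyD[OF Z])

lemma conv_conv_right:
  assumes X: "sq_family m X" and Y: "sq_family m Y" and Z: "sq_family m Z"
  shows "conv m X (conv m Y Z) i j = lincomb_mat PP (\<lambda>(p,q). delta H i p q) (\<lambda>(p,q). lincomb_mat PP (\<lambda>(r,s). delta H j r s)
     (\<lambda>(r,s). lincomb_mat PP (\<lambda>(q',q''). delta H q q' q'') (\<lambda>(q',q''). lincomb_mat PP (\<lambda>(s',s''). delta H s s' s'')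
       (\<lambda>(s',s''). X p r * (Y q' s' * Z q'' s'')) m m) m m) m m) m m"
  unfolding conv_def[of m X]
  by (auto intro!: lincomb_mat_cong simp: mult_conv[OF Y Z] sq_familyD[OF X])

lemma conv_assoc:
  assumes X: "sq_family m X" and Y: "sq_family m Y" and Z: "sq_family m Z" and i: "i < d" and j: "j < d"
  shows "conv m (conv m X Y) Z i j = conv m X (conv m Y Z) i j"
proof -
  let ?XYZ = "\<lambda>p r q' s' q'' s''. X p r * (Y q' s' * Z q'' s'')"
  have "conv m (conv m X Y) Z i j = lincomb_mat PP (\<lambda>(p,q). delta H i p q) (\<lambda>(p,q). lincomb_mat PP (\<lambda>(p',q'). delta H p p' q')
     (\<lambda>(p',q'). lincomb_mat PP (\<lambda>(r,s). delta H j r s) (\<lambda>(r,s). lincomb_mat PP (\<lambda>(r',s'). delta H r r' s')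
       (\<lambda>(r',s'). ?XYZ p' r' q' s' q s) m m) m m) m m) m m"
    unfolding conv_conv_left[OF X Y Z] by (rule lincomb_mat_cong) (auto intro!: lincomb_mat_swap)
  also have "\<dots> = lincomb_mat PP (\<lambda>(p,q). delta H i p q) (\<lambda>(p,q). lincomb_mat PP (\<lambda>(q',q''). delta H q q' q'')
     (\<lambda>(q',q''). lincomb_mat PP (\<lambda>(r,s). delta H j r s) (\<lambda>(r,s). lincomb_mat PP (\<lambda>(r',s'). delta H r r' s')
       (\<lambda>(r',s'). ?XYZ p r' q' s' q'' s) m m) m m) m m) m m"
    by (rule lincomb_mat_coassoc[OF i])
  also have "\<dots> = lincomb_mat PP (\<lambda>(p,q). delta H i p q) (\<lambda>(p,q). lincomb_mat PP (\<lambda>(q',q''). delta H q q' q'')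
     (\<lambda>(q',q''). lincomb_mat PP (\<lambda>(r,s). delta H j r s) (\<lambda>(r,s). lincomb_mat PP (\<lambda>(s',s''). delta H s s' s'')
       (\<lambda>(s',s''). ?XYZ p r q' s' q'' s'') m m) m m) m m) m m"
  proof -
    have "lincomb_mat PP (\<lambda>(r,s). delta H j r s) (\<lambda>(r,s). lincomb_mat PP (\<lambda>(r',s'). delta H r r' s')
        (\<lambda>(r',s'). ?XYZ p r' q' s' q'' s) m m) m m =
      lincomb_mat PP (\<lambda>(r,s). delta H j r s) (\<lambda>(r,s). lincomb_mat PP (\<lambda>(s',s''). delta H s s' s'')
        (\<lambda>(s',s''). ?XYZ p r q' s' q'' s'') m m) m m" for p q' q''
      by (rule lincomb_mat_coassoc[OF j])
    then show ?thesis by simp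
  qed
  also have "\<dots> = conv m X (conv m Y Z) i j"
    unfolding conv_conv_right[OF X Y Z] by (rule lincomb_mat_cong) (auto intro!: lincomb_mat_swap)
  finally show ?thesis .
qed

lemma counit_right_sum: "i < d \<Longrightarrow> (\<Sum>p<d. \<Sum>q<d. delta H i p q * (eps H q * f p)) = f i"
proof -
  assume i: "i < d"
  have "(\<Sum>p<d. \<Sum>q<d. delta H i p q * (eps H q * f p)) = (\<Sum>p<d. (\<Sum>q<d. eps H q * delta H i p q) * f p)"
    by (simp add: sum_distrib_right sum_distrib_left ac_simps)
  also have "\<dots> = (\<Sum>p<d. kd i p * f p)"
    by (rule sum.cong) (simp_all add: counit_right i)
  finally show ?thesis using i by simp
qed

lemma counit_left_sum: "i < d \<Longrightarrow> (\<Sum>p<d. \<Sum>q<d. delta H i p q * (eps H p * f q)) = f i"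
proof -
  assume i: "i < d"
  have "(\<Sum>p<d. \<Sum>q<d. delta H i p q * (eps H p * f q)) = (\<Sum>q<d. \<Sum>p<d. delta H i p q * (eps H p * f q))"
    by (rule sum.swap)
  also have "\<dots> = (\<Sum>q<d. (\<Sum>p<d. eps H p * delta H i p q) * f q)"
    by (simp add: sum_distrib_right sum_distrib_left ac_simps)
  also have "\<dots> = (\<Sum>q<d. kd i q * f q)"
    by (rule sum.cong) (simp_all add: counit_left i)
  finally show ?thesis using i by simp
qed

definition conv_unit :: "nat \<Rightarrow> nat \<Rightarrow> nat \<Rightarrow> 'k mat" where
  "conv_unit m a b = (eps H a * eps H b) \<cdot>\<^sub>m 1\<^sub>m m"


lemma conv_unit_right:
  assumes X: "sq_family m X" and i: "i < d" and j: "j < d"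
  shows "conv m X (conv_unit m) i j = X i j"
proof (rule eq_matI)
  fix u v assume "u < dim_row (X i j)" "v < dim_col (X i j)"
  then have uv: "u < m" "v < m" using sq_familyD[OF X i j] by auto
  have "conv m X (conv_unit m) i j $$ (u,v) = (\<Sum>p<d. \<Sum>q<d. delta H i p q * (\<Sum>r<d. \<Sum>s<d. delta H j r s * (X p r * conv_unit m q s) $$ (u,v)))"
    using uv by (simp add: conv_def lincomb_mat_index sum_Times_nested)
  also have "\<dots> = (\<Sum>p<d. \<Sum>q<d. delta H i p q * (eps H q * (\<Sum>r<d. \<Sum>s<d. delta H j r s * (eps H s * X p r $$ (u,v)))))"
  proof (intro sum.cong refl)
    fix p q assume pq: "p \<in> D" "q \<in> D"
    have "(\<Sum>r<d. \<Sum>s<d. delta H j r s * (X p r * conv_unit m q s) $$ (u,v)) = (\<Sum>r<d. \<Sum>s<d. delta H j r s * (eps H q * (eps H s * X p r $$ (u,v))))"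
    proof (intro sum.cong refl)
      fix r s assume rs: "r \<in> D" "s \<in> D"
      have "X p r * conv_unit m q s = (eps H q * eps H s) \<cdot>\<^sub>m X p r"
        using sq_familyD[OF X, of p r] pq rs by (simp add: conv_unit_def mult_smult_distrib[of _ m m _ m])
      then show "delta H j r s * (X p r * conv_unit m q s) $$ (u,v) = delta H j r s * (eps H q * (eps H s * X p r $$ (u,v)))"
        using sq_familyD[OF X, of p r] pq rs uv by simp
    qed
    then show "delta H i p q * (\<Sum>r<d. \<Sum>s<d. delta H j r s * (X p r * conv_unit m q s) $$ (u,v)) =
      delta H i p q * (eps H q * (\<Sum>r<d. \<Sum>s<d. delta H j r s * (eps H s * X p r $$ (u,v))))"
      by (simp add: sum_distrib_left ac_simps)
  qed
  also have "\<dots> = X i j $$ (u,v)"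
    using counit_right_sum[OF i] counit_right_sum[OF j] by simp
  finally show "conv m X (conv_unit m) i j $$ (u,v) = X i j $$ (u,v)" .
qed (use sq_familyD[OF X i j] in \<open>auto simp: conv_def\<close>)

lemma conv_unit_left:
  assumes X: "sq_family m X" and i: "i < d" and j: "j < d"
  shows "conv m (conv_unit m) X i j = X i j"
proof (rule eq_matI)
  fix u v assume "u < dim_row (X i j)" "v < dim_col (X i j)"
  then have uv: "u < m" "v < m" using sq_familyD[OF X i j] by auto
  have "conv m (conv_unit m) X i j $$ (u,v) = (\<Sum>p<d. \<Sum>q<d. delta H i p q * (\<Sum>r<d. \<Sum>s<d. delta H j r s * (conv_unit m p r * X q s) $$ (u,v)))"
    using uv by (simp add: conv_def lincomb_mat_index sum_Times_nested)
  also have "\<dots> = (\<Sum>p<d. \<Sum>q<d. delta H i p q * (eps H p * (\<Sum>r<d. \<Sum>s<d. delta H j r s * (eps H r * X q s $$ (u,v)))))"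
  proof (intro sum.cong refl)
    fix p q assume pq: "p \<in> D" "q \<in> D"
    have "(\<Sum>r<d. \<Sum>s<d. delta H j r s * (conv_unit m p r * X q s) $$ (u,v)) = (\<Sum>r<d. \<Sum>s<d. delta H j r s * (eps H p * (eps H r * X q s $$ (u,v))))"
    proof (intro sum.cong refl)
      fix r s assume rs: "r \<in> D" "s \<in> D"
      have "conv_unit m p r * X q s = (eps H p * eps H r) \<cdot>\<^sub>m X q s"
        using sq_familyD[OF X, of q s] pq rs by (simp add: conv_unit_def mult_smult_assoc_mat[of _ m m _ m])
      then show "delta H j r s * (conv_unit m p r * X q s) $$ (u,v) = delta H j r s * (eps H p * (eps H r * X q s $$ (u,v)))"
        using sq_familyD[OF X, of q s] pq rs uv by simp
    qed
    then show "delta H i p q * (\<Sum>r<d. \<Sum>s<d. delta H j r s * (conv_unit m p r * X q s) $$ (u,v)) =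
      delta H i p q * (eps H p * (\<Sum>r<d. \<Sum>s<d. delta H j r s * (eps H r * X q s $$ (u,v))))"
      by (simp add: sum_distrib_left ac_simps)
  qed
  also have "\<dots> = X i j $$ (u,v)"
    using counit_left_sum[OF i] counit_left_sum[OF j] by simp
  finally show "conv m (conv_unit m) X i j $$ (u,v) = X i j $$ (u,v)" .
qed (use sq_familyD[OF X i j] in \<open>auto simp: conv_def\<close>)

lemma conv_cong:
  assumes "\<And>p r. p < d \<Longrightarrow> r < d \<Longrightarrow> X p r = X' p r" "\<And>p r. p < d \<Longrightarrow> r < d \<Longrightarrow> Y p r = Y' p r"
  shows "conv m X Y i j = conv m X' Y' i j"
  unfolding conv_def
  by (intro lincomb_mat_cong) (auto simp: assms intro!: lincomb_mat_cong)


lemma lincomb_mat_delta_mult: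
  assumes i: "i < d" and j: "j < d"
  shows "lincomb_mat PP (\<lambda>(p,q). delta H i p q) (\<lambda>x. lincomb_mat PP (\<lambda>(r,s). delta H j r s)
      (\<lambda>y. lincomb_mat PP (\<lambda>(l,b). mu H (fst x) (fst y) l * mu H (snd x) (snd y) b) \<Phi> a a) a a) a a =
    lincomb_mat D (mu H i j) (\<lambda>c. lincomb_mat PP (\<lambda>(l,b). delta H c l b) \<Phi> a a) a a"
proof -
  have coeff: "(\<Sum>x\<in>PP. (case x of (p,q) \<Rightarrow> delta H i p q) * (\<Sum>y\<in>PP. (case y of (r,s) \<Rightarrow> delta H j r s) *
      (case z of (l,b) \<Rightarrow> mu H (fst x) (fst y) l * mu H (snd x) (snd y) b))) =
    (\<Sum>c\<in>D. mu H i j c * (case z of (l,b) \<Rightarrow> delta H c l b))" if "z \<in> PP" for z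
  proof -
    obtain l b where lb: "z = (l,b)" "l < d" "b < d" using \<open>z \<in> PP\<close> by auto
    then have "(\<Sum>x\<in>PP. (case x of (p,q) \<Rightarrow> delta H i p q) * (\<Sum>y\<in>PP. (case y of (r,s) \<Rightarrow> delta H j r s) *
        (case z of (l,b) \<Rightarrow> mu H (fst x) (fst y) l * mu H (snd x) (snd y) b))) =
      (\<Sum>p<d. \<Sum>q<d. \<Sum>r<d. \<Sum>s<d. delta H i p q * delta H j r s * mu H p r l * mu H q s b)"
      by (simp add: sum_Times_nested sum_distrib_left ac_simps)
    also have "\<dots> = (\<Sum>c<d. mu H i j c * delta H c l b)"
      using delta_mult[OF i j lb(2) lb(3)] by simp
    finally show ?thesis using lb by simp
  qed
  show ?thesis
    by (simp only: lincomb_mat_lincomb lincomb_mat_coeff_cong[OF coeff])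
qed

lemma lincomb_rep_mult_ant_antimult:
  assumes M: "is_mod H M" and p: "p < d" and q: "q < d" and j: "j < d"
  shows "lincomb_mat PP (\<lambda>(r,s). delta H j r s) (\<lambda>(r,s). snd M p * snd M r * (ant_rep M s * ant_rep M q)) (fst M) (fst M) =
    eps H j \<cdot>\<^sub>m (snd M p * ant_rep M q)"
proof -
  let ?m = "fst M" and ?\<rho> = "snd M"
  note c = is_mod_carrier[OF M]
  have "lincomb_mat PP (\<lambda>(r,s). delta H j r s) (\<lambda>(r,s). ?\<rho> p * ?\<rho> r * (ant_rep M s * ant_rep M q)) ?m ?m =
        lincomb_mat PP (\<lambda>(r,s). delta H j r s) (\<lambda>y. ?\<rho> p * (case y of (r,s) \<Rightarrow> ?\<rho> r * ant_rep M s) * ant_rep M q) ?m ?m"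
  proof (rule lincomb_mat_cong, clarify)
    fix r s assume rs: "r < d" "s < d"
    have "?\<rho> p * ?\<rho> r * (ant_rep M s * ant_rep M q) = ?\<rho> p * ?\<rho> r * ant_rep M s * ant_rep M q"
      by (rule assoc_mult_mat[symmetric, OF mult_carrier_mat[OF c[OF p] c[OF rs(1)]] ant_rep_carrier ant_rep_carrier])
    also have "?\<rho> p * ?\<rho> r * ant_rep M s = ?\<rho> p * (?\<rho> r * ant_rep M s)"
      by (rule assoc_mult_mat[OF c[OF p] c[OF rs(1)] ant_rep_carrier])
    finally show "?\<rho> p * ?\<rho> r * (ant_rep M s * ant_rep M q) = ?\<rho> p * (?\<rho> r * ant_rep M s) * ant_rep M q" .
  qed
  also have "\<dots> = lincomb_mat PP (\<lambda>(r,s). delta H j r s) (\<lambda>y. ?\<rho> p * (case y of (r,s) \<Rightarrow> ?\<rho> r * ant_rep M s)) ?m ?m * ant_rep M q"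
    by (rule lincomb_mat_mult[symmetric]) (use c[OF p] c in \<open>auto intro!: mult_carrier_mat\<close>)
  also have "lincomb_mat PP (\<lambda>(r,s). delta H j r s) (\<lambda>y. ?\<rho> p * (case y of (r,s) \<Rightarrow> ?\<rho> r * ant_rep M s)) ?m ?m =
      ?\<rho> p * lincomb_mat PP (\<lambda>(r,s). delta H j r s) (\<lambda>(r,s). ?\<rho> r * ant_rep M s) ?m ?m"
    by (rule mult_lincomb_mat[symmetric]) (use c[OF p] c in \<open>auto intro!: mult_carrier_mat\<close>)
  also have "?\<rho> p * lincomb_mat PP (\<lambda>(r,s). delta H j r s) (\<lambda>(r,s). ?\<rho> r * ant_rep M s) ?m ?m * ant_rep M q =
      eps H j \<cdot>\<^sub>m (?\<rho> p * ant_rep M q)"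
    using c[OF p] by (simp add: ant_rep_right_inverse[OF M j] mult_smult_distrib[of _ ?m ?m _ ?m] mult_smult_assoc_mat[of _ ?m ?m _ ?m])
  finally show ?thesis .
qed

lemma conv_rep_mult_ant_antimult:
  assumes M: "is_mod H M" and i: "i < d" and j: "j < d"
  shows "conv (fst M) (\<lambda>p r. snd M p * snd M r) (\<lambda>q s. ant_rep M s * ant_rep M q) i j = conv_unit (fst M) i j"
proof -
  let ?m = "fst M" and ?\<rho> = "snd M"
  have "conv ?m (\<lambda>p r. ?\<rho> p * ?\<rho> r) (\<lambda>q s. ant_rep M s * ant_rep M q) i j =
        lincomb_mat PP (\<lambda>(p,q). delta H i p q) (\<lambda>x. eps H j \<cdot>\<^sub>m (case x of (p,q) \<Rightarrow> ?\<rho> p * ant_rep M q)) ?m ?m"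
    unfolding conv_def by (rule lincomb_mat_cong) (auto simp: lincomb_rep_mult_ant_antimult[OF M _ _ j])
  also have "\<dots> = eps H j \<cdot>\<^sub>m lincomb_mat PP (\<lambda>(p,q). delta H i p q) (\<lambda>(p,q). ?\<rho> p * ant_rep M q) ?m ?m"
    by (rule lincomb_mat_smult) (use is_mod_carrier[OF M] in \<open>auto intro!: mult_carrier_mat\<close>)
  also have "\<dots> = conv_unit ?m i j"
    using ant_rep_right_inverse[OF M i] by (simp add: conv_unit_def smult_smult_mat mult.commute)
  finally show ?thesis .
qed

lemma ant_rep_lincomb_mult:
  assumes M: "is_mod H M" and q: "q < d" and s: "s < d"
  shows "lincomb_mat D c (ant_rep M) (fst M) (fst M) * (snd M q * snd M s) =
    lincomb_mat PP (\<lambda>(l,b). c l * mu H q s b) (\<lambda>(l,b). ant_rep M l * snd M b) (fst M) (fst M)"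
proof -
  let ?m = "fst M" and ?\<rho> = "snd M"
  have "lincomb_mat D c (ant_rep M) ?m ?m * (?\<rho> q * ?\<rho> s) = lincomb_mat D c (\<lambda>l. ant_rep M l * lincomb_mat D (mu H q s) ?\<rho> ?m ?m) ?m ?m"
    unfolding is_mod_mult[OF M q s] by (rule lincomb_mat_mult) auto
  also have "\<dots> = lincomb_mat D c (\<lambda>l. lincomb_mat D (mu H q s) (\<lambda>b. ant_rep M l * ?\<rho> b) ?m ?m) ?m ?m"
    by (rule lincomb_mat_cong, rule mult_lincomb_mat) (use is_mod_carrier[OF M] in auto)
  also have "\<dots> = lincomb_mat PP (\<lambda>(l,b). c l * mu H q s b) (\<lambda>(l,b). ant_rep M l * ?\<rho> b) ?m ?m"
    by (rule lincomb_mat_Times)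
  finally show ?thesis .
qed

lemma conv_ant_mult_rep_mult:
  assumes M: "is_mod H M" and i: "i < d" and j: "j < d"
  shows "conv (fst M) (\<lambda>p r. lincomb_mat D (mu H p r) (ant_rep M) (fst M) (fst M)) (\<lambda>q s. snd M q * snd M s) i j = conv_unit (fst M) i j"
proof -
  let ?m = "fst M" and ?\<Phi> = "\<lambda>(l,b). ant_rep M l * snd M b"
  have "conv ?m (\<lambda>p r. lincomb_mat D (mu H p r) (ant_rep M) ?m ?m) (\<lambda>q s. snd M q * snd M s) i j =
        lincomb_mat PP (\<lambda>(p,q). delta H i p q) (\<lambda>x. lincomb_mat PP (\<lambda>(r,s). delta H j r s)
          (\<lambda>y. lincomb_mat PP (\<lambda>(l,b). mu H (fst x) (fst y) l * mu H (snd x) (snd y) b) ?\<Phi> ?m ?m) ?m ?m) ?m ?m"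
    unfolding conv_def by (auto intro!: lincomb_mat_cong simp: ant_rep_lincomb_mult[OF M])
  also have "\<dots> = lincomb_mat D (mu H i j) (\<lambda>c. eps H c \<cdot>\<^sub>m 1\<^sub>m ?m) ?m ?m"
    unfolding lincomb_mat_delta_mult[OF i j]
    by (rule lincomb_mat_cong) (use ant_rep_left_inverse[OF M] in \<open>auto simp: case_prod_beta\<close>)
  also have "\<dots> = conv_unit ?m i j"
    using eps_mult[OF i j] by (simp add: lincomb_mat_smult_const conv_unit_def)
  finally show ?thesis .
qed

lemma sq_family_ant_mult: "sq_family (fst M) (\<lambda>p r. lincomb_mat D (mu H p r) (ant_rep M) (fst M) (fst M))"
  by (simp add: sq_family_def)

lemma ant_rep_antimult:
  assumes M: "is_mod H M" and i: "i < d" and j: "j < d"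
  shows "ant_rep M j * ant_rep M i = lincomb_mat D (mu H i j) (ant_rep M) (fst M) (fst M)"
proof -
  let ?m = "fst M"
  let ?F = "\<lambda>p r. lincomb_mat D (mu H p r) (ant_rep M) ?m ?m" and ?Mu = "\<lambda>p r. snd M p * snd M r" and ?G = "\<lambda>q s. ant_rep M s * ant_rep M q"
  have fF: "sq_family ?m ?F" by (rule sq_family_ant_mult)
  have fMu: "sq_family ?m ?Mu" using is_mod_carrier[OF M] by (auto simp: sq_family_def intro!: mult_carrier_mat)
  have fG: "sq_family ?m ?G" unfolding sq_family_def using mult_carrier_mat[OF ant_rep_carrier ant_rep_carrier] by blast
  have "?F i j = conv ?m ?F (conv_unit ?m) i j" by (rule conv_unit_right[OF fF i j, symmetric])
  also have "\<dots> = conv ?m ?F (conv ?m ?Mu ?G) i j"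
    by (rule conv_cong) (use conv_rep_mult_ant_antimult[OF M] in auto)
  also have "\<dots> = conv ?m (conv ?m ?F ?Mu) ?G i j"
    by (rule conv_assoc[OF fF fMu fG i j, symmetric])
  also have "\<dots> = conv ?m (conv_unit ?m) ?G i j"
    by (rule conv_cong) (use conv_ant_mult_rep_mult[OF M] in auto)
  also have "\<dots> = ?G i j" by (rule conv_unit_left[OF fG i j])
  finally show ?thesis by simp
qed

lemma antipode_unit: assumes q: "q < d" shows "(\<Sum>l<d. eta H l * antip H l q) = eta H q"
proof -
  have "eta H q = (\<Sum>l<d. eta H l * (eps H l * eta H q))"
    using eps_unit by (simp add: sum_distrib_right[symmetric] mult.assoc[symmetric])
  also have "\<dots> = (\<Sum>l<d. eta H l * (\<Sum>i<d. \<Sum>j<d. \<Sum>p<d. delta H l i j * antip H i p * mu H p j q))"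
    using antipode_left q by simp
  also have "\<dots> = (\<Sum>l<d. \<Sum>i<d. \<Sum>j<d. \<Sum>p<d. eta H l * delta H l i j * (antip H i p * mu H p j q))"
    by (simp add: sum_distrib_left ac_simps)
  also have "\<dots> = (\<Sum>i<d. \<Sum>l<d. \<Sum>j<d. \<Sum>p<d. eta H l * delta H l i j * (antip H i p * mu H p j q))"
    by (rule sum.swap)
  also have "\<dots> = (\<Sum>i<d. \<Sum>j<d. \<Sum>l<d. \<Sum>p<d. eta H l * delta H l i j * (antip H i p * mu H p j q))"
    by (rule sum.cong[OF refl sum.swap])
  also have "\<dots> = (\<Sum>i<d. \<Sum>j<d. \<Sum>l<d. eta H l * delta H l i j * (\<Sum>p<d. antip H i p * mu H p j q))"
    by (simp only: sum_distrib_left)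
  also have "\<dots> = (\<Sum>i<d. \<Sum>j<d. (\<Sum>l<d. eta H l * delta H l i j) * (\<Sum>p<d. antip H i p * mu H p j q))"
    by (simp only: sum_distrib_right)
  also have "\<dots> = (\<Sum>i<d. \<Sum>j<d. eta H i * eta H j * (\<Sum>p<d. antip H i p * mu H p j q))"
    by (intro sum.cong refl) (simp add: delta_unit)
  also have "\<dots> = (\<Sum>i<d. \<Sum>j<d. \<Sum>p<d. eta H i * antip H i p * (eta H j * mu H p j q))"
    by (simp add: sum_distrib_left ac_simps)
  also have "\<dots> = (\<Sum>i<d. \<Sum>p<d. \<Sum>j<d. eta H i * antip H i p * (eta H j * mu H p j q))"
    by (rule sum.cong[OF refl sum.swap])
  also have "\<dots> = (\<Sum>i<d. \<Sum>p<d. eta H i * antip H i p * kd p q)"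
    by (intro sum.cong refl) (simp add: sum_distrib_left[symmetric] unit_right q)
  also have "\<dots> = (\<Sum>i<d. \<Sum>p<d. kd p q * (eta H i * antip H i p))"
    by (simp add: ac_simps)
  also have "\<dots> = (\<Sum>l<d. eta H l * antip H l q)"
    using q by (simp only: sum_kd_right)
  finally show ?thesis by simp
qed

lemma dual_rep: "i < d \<Longrightarrow> snd (dual H M) i = transpose_mat (ant_rep M i)"
  by (simp add: dual_def ant_rep_def lc_eq_lincomb_mat)

lemma is_mod_dual:
  assumes M: "is_mod H M"
  shows "is_mod H (dual H M)"
  unfolding is_mod_def Let_def
proof (intro conjI allI impI)
  let ?m = "fst M"
  fix i assume i: "i < d"
  show "snd (dual H M) i \<in> carrier_mat (fst (dual H M)) (fst (dual H M))"
    using i by (simp add: dual_rep)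
next
  let ?m = "fst M"
  fix i j assume i: "i < d" and j: "j < d"
  have "snd (dual H M) i * snd (dual H M) j = transpose_mat (ant_rep M i) * transpose_mat (ant_rep M j)"
    using i j by (simp add: dual_rep)
  also have "\<dots> = transpose_mat (ant_rep M j * ant_rep M i)"
    by (rule transpose_mult[symmetric, of _ ?m ?m _ ?m]) auto
  also have "\<dots> = transpose_mat (lincomb_mat D (mu H i j) (ant_rep M) ?m ?m)"
    by (simp add: ant_rep_antimult[OF M i j])
  also have "\<dots> = lincomb_mat D (mu H i j) (\<lambda>l. transpose_mat (ant_rep M l)) ?m ?m"
    by (rule transpose_lincomb_mat) auto
  also have "\<dots> = lc d (fst (dual H M)) (mu H i j) (snd (dual H M))"
    unfolding lc_eq_lincomb_mat dual_fst by (rule lincomb_mat_cong) (simp add: dual_rep)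
  finally show "snd (dual H M) i * snd (dual H M) j = lc d (fst (dual H M)) (mu H i j) (snd (dual H M))" .
next
  let ?m = "fst M"
  have "lc d (fst (dual H M)) (eta H) (snd (dual H M)) = lincomb_mat D (eta H) (\<lambda>l. transpose_mat (ant_rep M l)) ?m ?m"
    unfolding lc_eq_lincomb_mat dual_fst by (rule lincomb_mat_cong) (simp add: dual_rep)
  also have "\<dots> = transpose_mat (lincomb_mat D (eta H) (ant_rep M) ?m ?m)"
    by (rule transpose_lincomb_mat[symmetric]) auto
  also have "lincomb_mat D (eta H) (ant_rep M) ?m ?m = lincomb_mat D (\<lambda>q. \<Sum>l\<in>D. eta H l * antip H l q) (snd M) ?m ?m"
    unfolding ant_rep_def by (rule lincomb_mat_lincomb)
  also have "\<dots> = lincomb_mat D (eta H) (snd M) ?m ?m"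
    by (rule lincomb_mat_coeff_cong) (simp add: antipode_unit)
  also have "\<dots> = 1\<^sub>m ?m" by (rule is_mod_unit[OF M])
  finally show "lc d (fst (dual H M)) (eta H) (snd (dual H M)) = 1\<^sub>m (fst (dual H M))" by simp
qed

end

section \<open>Tensor products and the trivial module\<close>

definition triv_amod :: "'k::field hopf_data \<Rightarrow> 'k amod" where
  "triv_amod H = (1, (\<lambda>i. mat 1 1 (\<lambda>_. eps H i)))"

lemma tpow_0[simp]: "tpow H M 0 = triv_amod H"
  by (simp add: triv_amod_def)

declare tpow.simps(1)[simp del]

lemma triv_amod_fst[simp]: "fst (triv_amod H) = 1"
  by (simp add: triv_amod_def)

lemma triv_amod_snd: "snd (triv_amod H) l = mat 1 1 (\<lambda>_. eps H l)"
  by (simp add: triv_amod_def)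

lemma wf_amod_triv[simp]: "wf_amod H (triv_amod H)"
  by (simp add: wf_amod_def triv_amod_snd)

context hopf begin

lemma kron_rep_mult:
  assumes M: "is_mod H M" and N: "is_mod H N" and p: "p < d" and q: "q < d" and r: "r < d" and s: "s < d"
  shows "kron (snd M p) (snd N q) * kron (snd M r) (snd N s) =
    lincomb_mat PP (\<lambda>(x,y). mu H p r x * mu H q s y) (\<lambda>(x,y). kron (snd M x) (snd N y)) (fst M * fst N) (fst M * fst N)"
proof -
  note cM = is_mod_carrier[OF M] and cN = is_mod_carrier[OF N]
  have "kron (snd M p) (snd N q) * kron (snd M r) (snd N s) = kron (snd M p * snd M r) (snd N q * snd N s)"
    by (rule kron_mult_mixed[OF cM[OF p] cM[OF r] cN[OF q] cN[OF s]])
  then show ?thesis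
    using is_mod_mult[OF M p r] is_mod_mult[OF N q s] kron_lincomb_mat[of D "snd M" _ _ D "snd N"] cM cN
    by simp
qed

lemma tensor_rep_mult:
  assumes M: "is_mod H M" and N: "is_mod H N" and i: "i < d" and j: "j < d"
  shows "snd (tensor H M N) i * snd (tensor H M N) j =
    lincomb_mat D (mu H i j) (snd (tensor H M N)) (fst M * fst N) (fst M * fst N)"
proof -
  let ?mn = "fst M * fst N" and ?K = "\<lambda>(p,q). kron (snd M p) (snd N q)"
  have cK: "\<And>x. x \<in> PP \<Longrightarrow> ?K x \<in> carrier_mat ?mn ?mn"
    using is_mod_carrier[OF M] is_mod_carrier[OF N] by (auto intro!: kron_carrier_mat)
  have "snd (tensor H M N) i * snd (tensor H M N) j =
      lincomb_mat PP (\<lambda>(p,q). delta H i p q) (\<lambda>x. ?K x * lincomb_mat PP (\<lambda>(p,q). delta H j p q) ?K ?mn ?mn) ?mn ?mn"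
    unfolding tensor_rep_lincomb by (rule lincomb_mat_mult) (use cK in auto)
  also have "\<dots> = lincomb_mat PP (\<lambda>(p,q). delta H i p q) (\<lambda>x. lincomb_mat PP (\<lambda>(r,s). delta H j r s)
      (\<lambda>y. lincomb_mat PP (\<lambda>(l,b). mu H (fst x) (fst y) l * mu H (snd x) (snd y) b) ?K ?mn ?mn) ?mn ?mn) ?mn ?mn"
    by (rule lincomb_mat_cong, rule trans[OF mult_lincomb_mat lincomb_mat_cong])
      (use cK in \<open>auto simp: kron_rep_mult[OF M N]\<close>)
  also have "\<dots> = lincomb_mat D (mu H i j) (\<lambda>c. lincomb_mat PP (\<lambda>(l,b). delta H c l b) ?K ?mn ?mn) ?mn ?mn"
    by (rule lincomb_mat_delta_mult[OF i j])
  also have "\<dots> = lincomb_mat D (mu H i j) (snd (tensor H M N)) ?mn ?mn"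
    by (rule lincomb_mat_cong) (simp add: tensor_rep_lincomb)
  finally show ?thesis .
qed

lemma tensor_rep_unit:
  assumes M: "is_mod H M" and N: "is_mod H N"
  shows "lincomb_mat D (eta H) (snd (tensor H M N)) (fst M * fst N) (fst M * fst N) = 1\<^sub>m (fst M * fst N)"
proof -
  let ?mn = "fst M * fst N" and ?K = "\<lambda>(p,q). kron (snd M p) (snd N q)"
  have "lincomb_mat D (eta H) (snd (tensor H M N)) ?mn ?mn =
      lincomb_mat PP (\<lambda>z. \<Sum>l\<in>D. eta H l * (case z of (p,q) \<Rightarrow> delta H l p q)) ?K ?mn ?mn"
    unfolding tensor_rep_lincomb by (rule lincomb_mat_lincomb)
  also have "\<dots> = lincomb_mat PP (\<lambda>(x,y). eta H x * eta H y) ?K ?mn ?mn"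
    by (rule lincomb_mat_coeff_cong) (auto simp: delta_unit)
  also have "\<dots> = kron (lincomb_mat D (eta H) (snd M) (fst M) (fst M)) (lincomb_mat D (eta H) (snd N) (fst N) (fst N))"
    by (rule kron_lincomb_mat[symmetric]) (use is_mod_carrier[OF M] is_mod_carrier[OF N] in auto)
  also have "\<dots> = 1\<^sub>m ?mn"
    using is_mod_unit[OF M] is_mod_unit[OF N] by (simp add: kron_one_mat)
  finally show ?thesis .
qed

lemma is_mod_tensor:
  assumes "is_mod H M" "is_mod H N"
  shows "is_mod H (tensor H M N)"
  unfolding is_mod_def[of H "tensor H M N"] Let_def lc_eq_lincomb_mat tensor_fst
  using tensor_rep_mult[OF assms] tensor_rep_unit[OF assms] wf_amodD[OF wf_amod_tensor[of H M N]]
  by simp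

lemma is_mod_triv: "is_mod H (triv_amod H)"
  unfolding is_mod_def Let_def triv_amod_def fst_conv snd_conv
proof (intro conjI allI impI)
  fix i j assume i: "i < d" and j: "j < d"
  show "mat 1 1 (\<lambda>_. eps H i) * mat 1 1 (\<lambda>_. eps H j) = lc d 1 (mu H i j) (\<lambda>l. mat 1 1 (\<lambda>_. eps H l))"
    by (rule eq_matI) (use eps_mult[OF i j] in \<open>auto simp: lc_def scalar_prod_def mult.commute\<close>)
next
  show "lc d 1 (eta H) (\<lambda>l. mat 1 1 (\<lambda>_. eps H l)) = 1\<^sub>m 1"
    by (rule eq_matI) (use eps_unit in \<open>auto simp: lc_def\<close>)
qed auto

lemma tensor_triv_right:
  assumes M: "wf_amod H M"
  shows "same_amod H (tensor H M (triv_amod H)) M"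
  unfolding same_amod_def
proof (intro conjI allI impI)
  show "fst (tensor H M (triv_amod H)) = fst M" by simp
  fix l assume l: "l < d"
  show "snd (tensor H M (triv_amod H)) l = snd M l"
  proof (rule eq_matI)
    fix u v assume uv: "u < dim_row (snd M l)" "v < dim_col (snd M l)"
    then have u: "u < fst M" and v: "v < fst M" using wf_amodD[OF M l] by auto
    have "snd (tensor H M (triv_amod H)) l $$ (u,v) = (\<Sum>p<d. \<Sum>q<d. delta H l p q * (eps H q * snd M p $$ (u,v)))"
      unfolding tensor_rep_lincomb using u v
    proof (simp add: lincomb_mat_index sum_Times_nested triv_amod_snd, intro sum.cong refl)
      fix p q assume pq: "p \<in> D" "q \<in> D"
      show "delta H l p q * kron (snd M p) (mat (Suc 0) (Suc 0) (\<lambda>_. eps H q)) $$ (u, v) = delta H l p q * (eps H q * snd M p $$ (u,v))"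
        using wf_amodD[OF M, of p] pq u v by (simp add: kron_index)
    qed
    also have "\<dots> = snd M l $$ (u,v)" by (rule counit_right_sum[OF l])
    finally show "snd (tensor H M (triv_amod H)) l $$ (u,v) = snd M l $$ (u,v)" .
  qed (use wf_amodD[OF M l] in \<open>auto simp: tensor_rep_lincomb\<close>)
qed

lemma tensor_triv_left:
  assumes M: "wf_amod H M"
  shows "same_amod H (tensor H (triv_amod H) M) M"
  unfolding same_amod_def
proof (intro conjI allI impI)
  show "fst (tensor H (triv_amod H) M) = fst M" by simp
  fix l assume l: "l < d"
  show "snd (tensor H (triv_amod H) M) l = snd M l"
  proof (rule eq_matI)
    fix u v assume uv: "u < dim_row (snd M l)" "v < dim_col (snd M l)"
    then have u: "u < fst M" and v: "v < fst M" using wf_amodD[OF M l] by auto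
    have "snd (tensor H (triv_amod H) M) l $$ (u,v) = (\<Sum>p<d. \<Sum>q<d. delta H l p q * (eps H p * snd M q $$ (u,v)))"
      unfolding tensor_rep_lincomb using u v
    proof (simp add: lincomb_mat_index sum_Times_nested triv_amod_snd, intro sum.cong refl)
      fix p q assume pq: "p \<in> D" "q \<in> D"
      show "delta H l p q * kron (mat (Suc 0) (Suc 0) (\<lambda>_. eps H p)) (snd M q) $$ (u, v) = delta H l p q * (eps H p * snd M q $$ (u,v))"
        using wf_amodD[OF M, of q] pq u v by (simp add: kron_index)
    qed
    also have "\<dots> = snd M l $$ (u,v)" by (rule counit_left_sum[OF l])
    finally show "snd (tensor H (triv_amod H) M) l $$ (u,v) = snd M l $$ (u,v)" .
  qed (use wf_amodD[OF M l] in \<open>auto simp: tensor_rep_lincomb\<close>)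
qed

lemma tensor_tensor_left_rep:
  assumes M: "wf_amod H M" and N: "wf_amod H N" and L: "wf_amod H L"
  shows "snd (tensor H (tensor H M N) L) l = lincomb_mat PP (\<lambda>(i,j). delta H l i j)
    (\<lambda>(i,j). lincomb_mat PP (\<lambda>(p,q). delta H i p q) (\<lambda>(p,q). kron (kron (snd M p) (snd N q)) (snd L j))
      (fst M * fst N * fst L) (fst M * fst N * fst L)) (fst M * fst N * fst L) (fst M * fst N * fst L)"
  unfolding tensor_rep_lincomb[of H "tensor H M N"] tensor_fst
proof (rule lincomb_mat_cong, clarify)
  fix i j assume ij: "i < d" "j < d"
  have "kron (snd (tensor H M N) i) (snd L j) = lincomb_mat PP (\<lambda>(p,q). delta H i p q)
      (\<lambda>y. kron (case y of (p,q) \<Rightarrow> kron (snd M p) (snd N q)) (snd L j)) (fst M * fst N * fst L) (fst M * fst N * fst L)"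
    unfolding tensor_rep_lincomb
    using kron_lincomb_mat_left[of PP "\<lambda>(p,q). kron (snd M p) (snd N q)" "fst M * fst N" "fst M * fst N"
        "\<lambda>(p,q). delta H i p q" "snd L j"]
      wf_amodD[OF L ij(2)] wf_amodD[OF M] wf_amodD[OF N]
    by (auto intro!: kron_carrier_mat)
  then show "kron (snd (tensor H M N) i) (snd L j) = lincomb_mat PP (\<lambda>(p,q). delta H i p q)
      (\<lambda>(p,q). kron (kron (snd M p) (snd N q)) (snd L j)) (fst M * fst N * fst L) (fst M * fst N * fst L)"
    by (simp add: split_def)
qed

lemma tensor_tensor_right_rep:
  assumes M: "wf_amod H M" and N: "wf_amod H N" and L: "wf_amod H L"
  shows "snd (tensor H M (tensor H N L)) l = lincomb_mat PP (\<lambda>(p,i). delta H l p i)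
    (\<lambda>(p,i). lincomb_mat PP (\<lambda>(q,j). delta H i q j) (\<lambda>(q,j). kron (kron (snd M p) (snd N q)) (snd L j))
      (fst M * fst N * fst L) (fst M * fst N * fst L)) (fst M * fst N * fst L) (fst M * fst N * fst L)"
  unfolding tensor_rep_lincomb[of H M] tensor_fst mult.assoc
proof (rule lincomb_mat_cong, clarify)
  fix p i assume pi: "p < d" "i < d"
  have "kron (snd M p) (snd (tensor H N L) i) = lincomb_mat PP (\<lambda>(q,j). delta H i q j)
      (\<lambda>y. kron (snd M p) (case y of (q,j) \<Rightarrow> kron (snd N q) (snd L j))) (fst M * (fst N * fst L)) (fst M * (fst N * fst L))"
    unfolding tensor_rep_lincomb
    using kron_lincomb_mat_right[of PP "\<lambda>(q,j). kron (snd N q) (snd L j)" "fst N * fst L" "fst N * fst L"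
        "snd M p" "\<lambda>(q,j). delta H i q j"]
      wf_amodD[OF M pi(1)] wf_amodD[OF N] wf_amodD[OF L]
    by (auto intro!: kron_carrier_mat)
  then show "kron (snd M p) (snd (tensor H N L) i) = lincomb_mat PP (\<lambda>(q,j). delta H i q j)
      (\<lambda>(q,j). kron (kron (snd M p) (snd N q)) (snd L j)) (fst M * (fst N * fst L)) (fst M * (fst N * fst L))"
    by (simp add: split_def kron_assoc)
qed

lemma tensor_assoc:
  assumes "wf_amod H M" "wf_amod H N" "wf_amod H L"
  shows "same_amod H (tensor H (tensor H M N) L) (tensor H M (tensor H N L))"
  unfolding same_amod_def tensor_tensor_left_rep[OF assms] tensor_tensor_right_rep[OF assms]
  by (auto simp: mult.assoc intro: lincomb_mat_coassoc)

end

section \<open>Evaluation, coevaluation and the zigzag identity\<close>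

text \<open>
  Indices of \<open>k\<^sup>n \<otimes> k\<^sup>n\<close> are flattened as \<open>i * n + j\<close>, as in \<open>kron\<close>.  Since the dual module
  acts by transposed matrices in the dual basis, \<open>coev n\<close> represents \<open>1 \<mapsto> \<Sum>\<^sub>i e\<^sub>i \<otimes> e\<^sub>i\<^sup>*\<close>,
  \<open>ev n\<close> represents \<open>e\<^sub>i\<^sup>* \<otimes> e\<^sub>j \<mapsto> \<delta>\<^sub>i\<^sub>j\<close>, and \<open>vectorize\<close>/\<open>covectorize\<close> flatten an
  \<open>n \<times> n\<close> matrix into a column/row.
\<close>

definition coev :: "nat \<Rightarrow> 'k::field mat" where
  "coev n = mat (n*n) 1 (\<lambda>(r,_). kd (r div n) (r mod n))"
definition ev :: "nat \<Rightarrow> 'k::field mat" where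
  "ev n = mat 1 (n*n) (\<lambda>(_,s). kd (s div n) (s mod n))"
definition vectorize :: "nat \<Rightarrow> 'k::field mat \<Rightarrow> 'k mat" where
  "vectorize n Z = mat (n*n) 1 (\<lambda>(r,_). Z $$ (r div n, r mod n))"
definition covectorize :: "nat \<Rightarrow> 'k::field mat \<Rightarrow> 'k mat" where
  "covectorize n Z = mat 1 (n*n) (\<lambda>(_,s). Z $$ (s div n, s mod n))"

lemma coev_carrier[simp]: "coev n \<in> carrier_mat (n*n) 1" by (simp add: coev_def)
lemma ev_carrier[simp]: "ev n \<in> carrier_mat 1 (n*n)" by (simp add: ev_def)
lemma coev_dims[simp]: "dim_row (coev n) = n*n" "dim_col (coev n) = 1" by (simp_all add: coev_def)
lemma ev_dims[simp]: "dim_row (ev n) = 1" "dim_col (ev n) = n*n" by (simp_all add: ev_def)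

lemma kron_transpose_coev:
  assumes A: "A \<in> carrier_mat n n" and B: "B \<in> carrier_mat n n"
  shows "kron A (transpose_mat B) * coev n = vectorize n (A * B)"
proof (rule eq_matI)
  fix r c assume r: "r < dim_row (vectorize n (A * B))" and c: "c < dim_col (vectorize n (A * B))"
  then have r': "r < n * n" and c0: "c = 0" by (auto simp: vectorize_def)
  have rd: "r div n < n" "r mod n < n" using div_mod_less_mult[OF r'] by auto
  have "(kron A (transpose_mat B) * coev n) $$ (r,c) = (\<Sum>t<n*n. kron A (transpose_mat B) $$ (r,t) * coev n $$ (t,0))"
    using A B r' c0 by (simp add: scalar_prod_def atLeast0LessThan)
  also have "\<dots> = (\<Sum>y<n. \<Sum>g<n. kron A (transpose_mat B) $$ (r,y*n+g) * coev n $$ (y*n+g,0))"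
    by (rule sum_lessThan_mult_split)
  also have "\<dots> = (\<Sum>y<n. \<Sum>g<n. kd y g * (A $$ (r div n, y) * B $$ (g, r mod n)))"
  proof (intro sum.cong refl)
    fix y g assume yg: "y \<in> {..<n}" "g \<in> {..<n}"
    then have t: "y*n+g < n*n" by (simp add: mult_add_less_mult)
    show "kron A (transpose_mat B) $$ (r,y*n+g) * coev n $$ (y*n+g,0) = kd y g * (A $$ (r div n, y) * B $$ (g, r mod n))"
      using A B r' t yg by (simp add: kron_index coev_def)
  qed
  also have "\<dots> = (\<Sum>y<n. A $$ (r div n, y) * B $$ (y, r mod n))"
    by (intro sum.cong refl) (simp add: sum_kd_left)
  also have "\<dots> = vectorize n (A * B) $$ (r,c)"
    using A B r' c0 rd by (simp add: vectorize_def scalar_prod_def atLeast0LessThan)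
  finally show "(kron A (transpose_mat B) * coev n) $$ (r,c) = vectorize n (A * B) $$ (r,c)" .
qed (use A B in \<open>auto simp: vectorize_def\<close>)

lemma ev_kron_transpose:
  assumes A: "A \<in> carrier_mat n n" and B: "B \<in> carrier_mat n n"
  shows "ev n * kron (transpose_mat B) A = covectorize n (B * A)"
proof (rule eq_matI)
  fix r c assume r: "r < dim_row (covectorize n (B * A))" and c: "c < dim_col (covectorize n (B * A))"
  then have c': "c < n * n" and r0: "r = 0" by (auto simp: covectorize_def)
  have cd: "c div n < n" "c mod n < n" using div_mod_less_mult[OF c'] by auto
  have "(ev n * kron (transpose_mat B) A) $$ (r,c) = (\<Sum>t<n*n. ev n $$ (0,t) * kron (transpose_mat B) A $$ (t,c))"
    using A B c' r0 by (simp add: scalar_prod_def atLeast0LessThan)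
  also have "\<dots> = (\<Sum>f<n. \<Sum>x<n. ev n $$ (0,f*n+x) * kron (transpose_mat B) A $$ (f*n+x,c))"
    by (rule sum_lessThan_mult_split)
  also have "\<dots> = (\<Sum>f<n. \<Sum>x<n. kd f x * (B $$ (c div n, f) * A $$ (x, c mod n)))"
  proof (intro sum.cong refl)
    fix f x assume yg: "f \<in> {..<n}" "x \<in> {..<n}"
    then have t: "f*n+x < n*n" by (simp add: mult_add_less_mult)
    show "ev n $$ (0,f*n+x) * kron (transpose_mat B) A $$ (f*n+x,c) = kd f x * (B $$ (c div n, f) * A $$ (x, c mod n))"
      using A B c' t yg cd by (simp add: kron_index ev_def)
  qed
  also have "\<dots> = (\<Sum>f<n. B $$ (c div n, f) * A $$ (f, c mod n))"
    by (intro sum.cong refl) (simp add: sum_kd_left)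
  also have "\<dots> = covectorize n (B * A) $$ (r,c)"
    using A B c' r0 cd by (simp add: covectorize_def scalar_prod_def atLeast0LessThan)
  finally show "(ev n * kron (transpose_mat B) A) $$ (r,c) = covectorize n (B * A) $$ (r,c)" .
qed (use A B in \<open>auto simp: covectorize_def\<close>)

lemma lincomb_mat_vectorize:
  assumes "\<And>x. x \<in> X \<Longrightarrow> Z x \<in> carrier_mat n n"
  shows "lincomb_mat X c (\<lambda>x. vectorize n (Z x)) (n*n) 1 = vectorize n (lincomb_mat X c Z n n)"
proof (rule eq_matI)
  fix r s assume "r < dim_row (vectorize n (lincomb_mat X c Z n n))" "s < dim_col (vectorize n (lincomb_mat X c Z n n))"
  then have r: "r < n*n" and s: "s = 0" by (auto simp: vectorize_def)
  have rd: "r div n < n" "r mod n < n" using div_mod_less_mult[OF r] by auto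
  show "lincomb_mat X c (\<lambda>x. vectorize n (Z x)) (n*n) 1 $$ (r,s) = vectorize n (lincomb_mat X c Z n n) $$ (r,s)"
    using r s rd by (simp add: lincomb_mat_index vectorize_def)
qed (auto simp: vectorize_def)

lemma lincomb_mat_covectorize:
  assumes "\<And>x. x \<in> X \<Longrightarrow> Z x \<in> carrier_mat n n"
  shows "lincomb_mat X c (\<lambda>x. covectorize n (Z x)) 1 (n*n) = covectorize n (lincomb_mat X c Z n n)"
proof (rule eq_matI)
  fix r s assume "r < dim_row (covectorize n (lincomb_mat X c Z n n))" "s < dim_col (covectorize n (lincomb_mat X c Z n n))"
  then have s: "s < n*n" and r: "r = 0" by (auto simp: covectorize_def)
  have sd: "s div n < n" "s mod n < n" using div_mod_less_mult[OF s] by auto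
  show "lincomb_mat X c (\<lambda>x. covectorize n (Z x)) 1 (n*n) $$ (r,s) = covectorize n (lincomb_mat X c Z n n) $$ (r,s)"
    using r s sd by (simp add: lincomb_mat_index covectorize_def)
qed (auto simp: covectorize_def)

lemma vectorize_smult_one: "vectorize n (k \<cdot>\<^sub>m 1\<^sub>m n) = k \<cdot>\<^sub>m coev n"
  by (rule eq_matI) (auto simp: vectorize_def coev_def kd_def dest!: div_mod_less_mult)

lemma covectorize_smult_one: "covectorize n (k \<cdot>\<^sub>m 1\<^sub>m n) = k \<cdot>\<^sub>m ev n"
  by (rule eq_matI) (auto simp: covectorize_def ev_def kd_def dest!: div_mod_less_mult)


lemma one_mat_kd: "i < n \<Longrightarrow> j < n \<Longrightarrow> (1\<^sub>m n :: 'k::field mat) $$ (i,j) = kd i j"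
  by (simp add: kd_def)

lemma kron_one_ev_index:
  assumes "r < n" "a < n" "f < n" "x < n"
  shows "kron (1\<^sub>m n :: 'k::field mat) (ev n) $$ (r, a*(n*n) + (f*n+x)) = kd r a * kd f x"
proof -
  have fx: "f*n+x < n*n" using assms by (simp add: mult_add_less_mult)
  then have "a*(n*n) + (f*n+x) < n*(n*n)" using assms by (simp add: mult_add_less_mult mult.commute)
  moreover have "ev n $$ (0, f*n+x) = (kd f x :: 'k)"
    using fx assms by (simp add: ev_def)
  ultimately show ?thesis
    using assms fx by (simp add: kron_index one_mat_kd kd_def)
qed

lemma kron_coev_one_index:
  assumes "a < n" "f < n" "x < n" "s < n"
  shows "kron (coev n) (1\<^sub>m n :: 'k::field mat) $$ (a*(n*n) + (f*n+x), s) = kd a f * kd x s"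
proof -
  have idx: "a*(n*n) + (f*n+x) = (a*n+f)*n + x" by (simp add: algebra_simps)
  have af: "a*n+f < n*n" using assms by (simp add: mult_add_less_mult)
  then have "(a*n+f)*n + x < n*n*n" using assms by (simp add: mult_add_less_mult)
  moreover have "coev n $$ (a*n+f, 0) = (kd a f :: 'k)"
    using af assms by (simp add: coev_def)
  ultimately show ?thesis
    unfolding idx using assms by (simp add: kron_index one_mat_kd kd_def)
qed

lemma ev_coev_zigzag: "kron (1\<^sub>m n) (ev n) * kron (coev n) (1\<^sub>m n) = (1\<^sub>m n :: 'k::field mat)"
proof (rule eq_matI)
  fix r s assume "r < dim_row (1\<^sub>m n :: 'k mat)" "s < dim_col (1\<^sub>m n :: 'k mat)"
  then have r: "r < n" and s: "s < n" by auto
  have "(kron (1\<^sub>m n) (ev n) * kron (coev n) (1\<^sub>m n)) $$ (r,s) =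
        (\<Sum>t<n*(n*n). kron (1\<^sub>m n) (ev n) $$ (r,t) * kron (coev n) (1\<^sub>m n :: 'k mat) $$ (t,s))"
    using r s by (simp add: scalar_prod_def atLeast0LessThan mult.assoc)
  also have "\<dots> = (\<Sum>a<n. \<Sum>f<n. \<Sum>x<n. kron (1\<^sub>m n) (ev n) $$ (r,a*(n*n)+(f*n+x)) *
      kron (coev n) (1\<^sub>m n :: 'k mat) $$ (a*(n*n)+(f*n+x),s))"
    by (simp only: sum_lessThan_mult_split)
  also have "\<dots> = (\<Sum>a<n. \<Sum>f<n. \<Sum>x<n. kd r a * (kd f x * (kd a f * (kd x s :: 'k))))"
    using r s by (intro sum.cong refl) (simp add: kron_one_ev_index kron_coev_one_index)
  also have "\<dots> = (\<Sum>a<n. kd r a * (\<Sum>f<n. \<Sum>x<n. kd f x * (kd a f * (kd x s :: 'k))))"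
    by (simp only: sum_distrib_left)
  also have "\<dots> = (\<Sum>f<n. \<Sum>x<n. kd f x * (kd r f * (kd x s :: 'k)))"
    by (rule sum_kd_left[OF r])
  also have "\<dots> = (\<Sum>f<n. kd r f * (kd f s :: 'k))"
    by (intro sum.cong refl) (simp add: s)
  also have "\<dots> = kd r s" using r by simp
  also have "\<dots> = (1\<^sub>m n :: 'k mat) $$ (r,s)" using r s by (simp add: kd_def)
  finally show "(kron (1\<^sub>m n) (ev n) * kron (coev n) (1\<^sub>m n)) $$ (r,s) = (1\<^sub>m n :: 'k mat) $$ (r,s)" .
qed auto

lemma coev_smult: "coev n * mat 1 1 (\<lambda>_. c) = c \<cdot>\<^sub>m coev n"
  by (rule eq_matI) (auto simp: coev_def scalar_prod_def)
lemma ev_smult: "mat 1 1 (\<lambda>_. c) * ev n = c \<cdot>\<^sub>m ev n"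
  by (rule eq_matI) (auto simp: ev_def scalar_prod_def)

context hopf begin

lemma coev_hom:
  assumes M: "is_mod H M"
  shows "hom H (triv_amod H) (tensor H M (dual H M)) (coev (fst M))"
  unfolding hom_def
proof (intro conjI allI impI)
  let ?m = "fst M"
  show "coev ?m \<in> carrier_mat (fst (tensor H M (dual H M))) (fst (triv_amod H))"
    unfolding tensor_fst dual_fst triv_amod_fst by (rule coev_carrier)
  fix l assume l: "l < d"
  have c: "\<And>i. i < d \<Longrightarrow> snd M i \<in> carrier_mat ?m ?m" using is_mod_carrier[OF M] by auto
  have "snd (tensor H M (dual H M)) l * coev ?m = lincomb_mat PP (\<lambda>(i,j). delta H l i j) (\<lambda>x. (case x of (i,j) \<Rightarrow> kron (snd M i) (snd (dual H M) j)) * coev ?m) (?m * ?m) 1"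
    unfolding tensor_rep_lincomb dual_fst by (rule lincomb_mat_mult) (use c in \<open>auto simp: dual_rep intro!: kron_carrier_mat\<close>)
  also have "\<dots> = lincomb_mat PP (\<lambda>(i,j). delta H l i j) (\<lambda>x. vectorize ?m ((\<lambda>(i,j). snd M i * ant_rep M j) x)) (?m * ?m) 1"
  proof (rule lincomb_mat_cong)
    fix x assume x: "x \<in> PP"
    obtain i j where ij: "x = (i,j)" "i < d" "j < d" using x by auto
    show "(case x of (i,j) \<Rightarrow> kron (snd M i) (snd (dual H M) j)) * coev ?m = vectorize ?m ((\<lambda>(i,j). snd M i * ant_rep M j) x)"
      using ij kron_transpose_coev[OF c[OF ij(2)] ant_rep_carrier[of M j]] by (simp add: dual_rep)
  qed
  also have "\<dots> = vectorize ?m (lincomb_mat PP (\<lambda>(i,j). delta H l i j) (\<lambda>(i,j). snd M i * ant_rep M j) ?m ?m)"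
    by (rule lincomb_mat_vectorize) (use c in \<open>auto intro!: mult_carrier_mat\<close>)
  also have "\<dots> = eps H l \<cdot>\<^sub>m coev ?m"
    by (simp add: ant_rep_right_inverse[OF M l] vectorize_smult_one)
  also have "\<dots> = coev ?m * snd (triv_amod H) l"
    unfolding triv_amod_snd by (rule coev_smult[symmetric])
  finally show "coev ?m * snd (triv_amod H) l = snd (tensor H M (dual H M)) l * coev ?m" by simp
qed

lemma ev_hom:
  assumes M: "is_mod H M"
  shows "hom H (tensor H (dual H M) M) (triv_amod H) (ev (fst M))"
  unfolding hom_def
proof (intro conjI allI impI)
  let ?m = "fst M"
  show "ev ?m \<in> carrier_mat (fst (triv_amod H)) (fst (tensor H (dual H M) M))"
    unfolding tensor_fst dual_fst triv_amod_fst by (rule ev_carrier)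
  fix l assume l: "l < d"
  have c: "\<And>i. i < d \<Longrightarrow> snd M i \<in> carrier_mat ?m ?m" using is_mod_carrier[OF M] by auto
  have "ev ?m * snd (tensor H (dual H M) M) l = lincomb_mat PP (\<lambda>(i,j). delta H l i j) (\<lambda>x. ev ?m * (case x of (i,j) \<Rightarrow> kron (snd (dual H M) i) (snd M j))) 1 (?m * ?m)"
    unfolding tensor_rep_lincomb dual_fst by (rule mult_lincomb_mat) (use c in \<open>auto simp: dual_rep intro!: kron_carrier_mat\<close>)
  also have "\<dots> = lincomb_mat PP (\<lambda>(i,j). delta H l i j) (\<lambda>x. covectorize ?m ((\<lambda>(i,j). ant_rep M i * snd M j) x)) 1 (?m * ?m)"
  proof (rule lincomb_mat_cong)
    fix x assume x: "x \<in> PP"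
    obtain i j where ij: "x = (i,j)" "i < d" "j < d" using x by auto
    show "ev ?m * (case x of (i,j) \<Rightarrow> kron (snd (dual H M) i) (snd M j)) = covectorize ?m ((\<lambda>(i,j). ant_rep M i * snd M j) x)"
      using ij ev_kron_transpose[OF c[OF ij(3)] ant_rep_carrier[of M i]] by (simp add: dual_rep)
  qed
  also have "\<dots> = covectorize ?m (lincomb_mat PP (\<lambda>(i,j). delta H l i j) (\<lambda>(i,j). ant_rep M i * snd M j) ?m ?m)"
  proof (rule lincomb_mat_covectorize)
    fix x assume x: "x \<in> PP"
    then obtain i j where ij: "x = (i,j)" "j < d" by auto
    show "(case x of (i,j) \<Rightarrow> ant_rep M i * snd M j) \<in> carrier_mat ?m ?m"
      using mult_carrier_mat[OF ant_rep_carrier[of M i] c[OF ij(2)]] ij by simp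
  qed
  also have "\<dots> = eps H l \<cdot>\<^sub>m ev ?m"
    by (simp add: ant_rep_left_inverse[OF M l] covectorize_smult_one)
  also have "\<dots> = snd (triv_amod H) l * ev ?m"
    unfolding triv_amod_snd by (rule ev_smult[symmetric])
  finally show "ev ?m * snd (tensor H (dual H M) M) l = snd (triv_amod H) l * ev ?m" .
qed

end

section \<open>Projective modules form a tensor ideal\<close>

lemma kron_one_mult_vec_index:
  fixes g :: "'k::field mat"
  assumes W: "\<And>x. W x \<in> carrier_vec (dim_col g)" and i: "i < dim_row g * n"
  shows "(kron g (1\<^sub>m n) *\<^sub>v vec (dim_col g * n) (\<lambda>t. W (t mod n) $ (t div n))) $ i = (g *\<^sub>v W (i mod n)) $ (i div n)"
proof -
  let ?p = "dim_col g" and ?w = "vec (dim_col g * n) (\<lambda>t. W (t mod n) $ (t div n))"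
  have id: "i div n < dim_row g" "i mod n < n" using div_mod_less_mult[OF i] by auto
  have "(kron g (1\<^sub>m n) *\<^sub>v ?w) $ i = (\<Sum>t<?p*n. kron g (1\<^sub>m n) $$ (i,t) * ?w $ t)"
    using i by (simp add: scalar_prod_def atLeast0LessThan)
  also have "\<dots> = (\<Sum>u<?p. \<Sum>y<n. kron g (1\<^sub>m n) $$ (i,u*n+y) * ?w $ (u*n+y))"
    by (rule sum_lessThan_mult_split)
  also have "\<dots> = (\<Sum>u<?p. \<Sum>y<n. kd (i mod n) y * (g $$ (i div n, u) * W y $ u))"
  proof (intro sum.cong refl)
    fix u y assume uy: "u \<in> {..<?p}" "y \<in> {..<n}"
    then have "u*n+y < ?p*n" by (simp add: mult_add_less_mult)
    then show "kron g (1\<^sub>m n) $$ (i,u*n+y) * ?w $ (u*n+y) = kd (i mod n) y * (g $$ (i div n, u) * W y $ u)"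
      using i uy id by (simp add: kron_index kd_def)
  qed
  also have "\<dots> = (\<Sum>u<?p. g $$ (i div n, u) * W (i mod n) $ u)"
    by (intro sum.cong refl) (simp add: id)
  also have "\<dots> = (g *\<^sub>v W (i mod n)) $ (i div n)"
    using id W[of "i mod n"] by (simp add: scalar_prod_def atLeast0LessThan)
  finally show ?thesis .
qed

lemma surj_mat_kron_one:
  assumes g: "surj_mat g"
  shows "surj_mat (kron g (1\<^sub>m n :: 'k::field mat))"
  unfolding surj_mat_def
proof (intro ballI)
  fix v :: "'k vec" assume "v \<in> carrier_vec (dim_row (kron g (1\<^sub>m n)))"
  then have vd: "dim_vec v = dim_row g * n" by simp
  define vx where "vx x = vec (dim_row g) (\<lambda>r. v $ (r*n + x))" for x
  have "\<forall>x. \<exists>w. w \<in> carrier_vec (dim_col g) \<and> g *\<^sub>v w = vx x"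
    using g unfolding surj_mat_def by (auto simp: vx_def)
  then obtain W where W: "\<And>x. W x \<in> carrier_vec (dim_col g)" "\<And>x. g *\<^sub>v W x = vx x" by metis
  define w where "w = vec (dim_col g * n) (\<lambda>t. W (t mod n) $ (t div n))"
  have "kron g (1\<^sub>m n) *\<^sub>v w = v"
  proof (rule eq_vecI)
    fix i assume "i < dim_vec v"
    then have i: "i < dim_row g * n" using vd by simp
    have "(kron g (1\<^sub>m n) *\<^sub>v w) $ i = (g *\<^sub>v W (i mod n)) $ (i div n)"
      unfolding w_def by (rule kron_one_mult_vec_index[OF W(1) i])
    also have "\<dots> = v $ (i div n * n + i mod n)"
      using W(2) div_mod_less_mult[OF i] by (simp add: vx_def)
    finally show "(kron g (1\<^sub>m n) *\<^sub>v w) $ i = v $ i" by simp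
  qed (use vd in simp)
  moreover have "w \<in> carrier_vec (dim_col (kron g (1\<^sub>m n)))" by (simp add: w_def)
  ultimately show "\<exists>w \<in> carrier_vec (dim_col (kron g (1\<^sub>m n))). kron g (1\<^sub>m n) *\<^sub>v w = v" by blast
qed

lemma mult_kron_one_row:
  assumes g: "g \<in> carrier_mat q n" and E: "E \<in> carrier_mat 1 e"
  shows "g * kron (1\<^sub>m n) E = kron (1\<^sub>m q) E * kron g (1\<^sub>m e :: 'k::field mat)"
proof -
  have "g * kron (1\<^sub>m n) E = kron g (1\<^sub>m 1) * kron (1\<^sub>m n) E" by (simp only: kron_one_1_right)
  also have "\<dots> = kron (g * 1\<^sub>m n) (1\<^sub>m 1 * E)"
    by (rule kron_mult_mixed[OF g _ _ E]) auto
  also have "\<dots> = kron (1\<^sub>m q * g) (E * 1\<^sub>m e)" using g E by simp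
  also have "\<dots> = kron (1\<^sub>m q) E * kron g (1\<^sub>m e)"
    by (rule kron_mult_mixed[symmetric, OF _ g E]) auto
  finally show ?thesis .
qed

lemma kron_one_ev_coev_zigzag:
  "kron (1\<^sub>m (p * y)) (ev y) * kron (kron (1\<^sub>m p) (coev y)) (1\<^sub>m y) = (1\<^sub>m (p * y) :: 'k::field mat)"
proof -
  have "kron (1\<^sub>m (p * y)) (ev y) * kron (kron (1\<^sub>m p) (coev y)) (1\<^sub>m y) =
      kron (1\<^sub>m p) (kron (1\<^sub>m y) (ev y)) * kron (1\<^sub>m p) (kron (coev y) (1\<^sub>m y) :: 'k mat)"
    by (simp add: kron_one_mat[symmetric] kron_assoc)
  also have "\<dots> = kron (1\<^sub>m p * 1\<^sub>m p) (kron (1\<^sub>m y) (ev y) * kron (coev y) (1\<^sub>m y))"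
  proof (rule kron_mult_mixed[OF one_carrier_mat one_carrier_mat])
    show "kron (1\<^sub>m y) (ev y) \<in> carrier_mat y (y * y * y)"
      using kron_carrier_mat[OF one_carrier_mat ev_carrier, of y y] by (simp add: mult.assoc)
    show "kron (coev y) (1\<^sub>m y) \<in> carrier_mat (y * y * y) (y :: nat)"
      using kron_carrier_mat[OF coev_carrier one_carrier_mat, of y y] by simp
  qed
  also have "\<dots> = 1\<^sub>m (p * y)"
    by (simp add: ev_coev_zigzag kron_one_mat)
  finally show ?thesis .
qed

lemma mult_kron_one_ev:
  fixes g :: "'k::field mat"
  assumes g: "g \<in> carrier_mat q n" and X: "X \<in> carrier_mat (n * y * y) m"
  shows "g * (kron (1\<^sub>m n) (ev y) * X) = kron (1\<^sub>m q) (ev y) * (kron (kron g (1\<^sub>m y)) (1\<^sub>m y) * X)"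
proof -
  have c1: "kron (1\<^sub>m n) (ev y) \<in> carrier_mat n (n * y * y)"
    using kron_carrier_mat[OF one_carrier_mat ev_carrier, of n y] by (simp add: mult.assoc)
  have c2: "kron (1\<^sub>m q) (ev y) \<in> carrier_mat q (q * y * y)"
    using kron_carrier_mat[OF one_carrier_mat ev_carrier, of q y] by (simp add: mult.assoc)
  have c3: "kron (kron g (1\<^sub>m y)) (1\<^sub>m y) \<in> carrier_mat (q * y * y) (n * y * y)"
    using kron_carrier_mat[OF kron_carrier_mat[OF g one_carrier_mat] one_carrier_mat] .
  have "g * kron (1\<^sub>m n) (ev y) = kron (1\<^sub>m q) (ev y) * kron g (1\<^sub>m (y * y))"
    by (rule mult_kron_one_row[OF g ev_carrier])
  also have "kron g (1\<^sub>m (y * y)) = kron (kron g (1\<^sub>m y)) (1\<^sub>m y)"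
    by (simp add: kron_one_mat[symmetric] kron_assoc)
  finally have "g * kron (1\<^sub>m n) (ev y) * X = kron (1\<^sub>m q) (ev y) * kron (kron g (1\<^sub>m y)) (1\<^sub>m y) * X"
    by simp
  then show ?thesis
    by (simp only: assoc_mult_mat[OF g c1 X] assoc_mult_mat[OF c2 c3 X])
qed

lemma kron_ev_lift:
  fixes g :: "'k::field mat"
  assumes g: "g \<in> carrier_mat q n" and f: "f \<in> carrier_mat q (p * y)" and h': "h' \<in> carrier_mat (n * y) p"
    and lift: "kron g (1\<^sub>m y) * h' = kron f (1\<^sub>m y) * kron (1\<^sub>m p) (coev y)"
  shows "g * (kron (1\<^sub>m n) (ev y) * kron h' (1\<^sub>m y)) = f"
proof -
  have c1: "kron h' (1\<^sub>m y) \<in> carrier_mat (n * y * y) (p * y)"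
    using kron_carrier_mat[OF h' one_carrier_mat] .
  have c2: "kron (1\<^sub>m p) (coev y) \<in> carrier_mat (p * y * y) p"
    using kron_carrier_mat[OF one_carrier_mat coev_carrier, of p y] by (simp add: mult.assoc)
  have c3: "kron (kron (1\<^sub>m p) (coev y)) (1\<^sub>m y) \<in> carrier_mat (p * y * y * y) (p * y)"
    using kron_carrier_mat[OF c2 one_carrier_mat, of y] .
  have "g * (kron (1\<^sub>m n) (ev y) * kron h' (1\<^sub>m y)) =
      kron (1\<^sub>m q) (ev y) * (kron (kron g (1\<^sub>m y)) (1\<^sub>m y) * kron h' (1\<^sub>m y))"
    by (rule mult_kron_one_ev[OF g c1])
  also have "kron (kron g (1\<^sub>m y)) (1\<^sub>m y) * kron h' (1\<^sub>m y) = kron (kron f (1\<^sub>m y) * kron (1\<^sub>m p) (coev y)) (1\<^sub>m y)"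
    using kron_mult_mixed[OF kron_carrier_mat[OF g one_carrier_mat] h' one_carrier_mat one_carrier_mat] lift by simp
  also have "\<dots> = kron (kron f (1\<^sub>m y)) (1\<^sub>m y) * kron (kron (1\<^sub>m p) (coev y)) (1\<^sub>m y)"
    using kron_mult_mixed[OF kron_carrier_mat[OF f one_carrier_mat] c2 one_carrier_mat one_carrier_mat] by simp
  also have "kron (1\<^sub>m q) (ev y) * \<dots> = f * (kron (1\<^sub>m (p * y)) (ev y) * kron (kron (1\<^sub>m p) (coev y)) (1\<^sub>m y))"
    by (rule mult_kron_one_ev[OF f c3, symmetric])
  also have "\<dots> = f"
    using f by (simp add: kron_one_ev_coev_zigzag)
  finally show ?thesis .
qed

context hopf begin

lemma retract_tensor_dual_tensor:
  assumes M: "is_mod H M"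
  shows "retract H M (tensor H M (tensor H (dual H M) M))"
proof -
  let ?m = "fst M" and ?Md = "dual H M"
  have wM[simp]: "wf_amod H M" by (rule is_mod_imp_wf_amod[OF M])
  have "hom H (tensor H (triv_amod H) M) (tensor H (tensor H M ?Md) M) (kron (coev ?m) (1\<^sub>m ?m))"
    by (simp add: hom_tensor_kron coev_hom[OF M] hom_id)
  then have "hom H M (tensor H M (tensor H ?Md M)) (kron (coev ?m) (1\<^sub>m ?m))"
    using hom_same_amod_left[OF tensor_triv_left] hom_same_amod_right[OF tensor_assoc] by simp
  moreover have "hom H (tensor H M (tensor H ?Md M)) (tensor H M (triv_amod H)) (kron (1\<^sub>m ?m) (ev ?m))"
    by (simp add: hom_tensor_kron ev_hom[OF M] hom_id)
  then have "hom H (tensor H M (tensor H ?Md M)) M (kron (1\<^sub>m ?m) (ev ?m))"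
    using hom_same_amod_right[OF tensor_triv_right] by simp
  ultimately show ?thesis
    unfolding retract_def using ev_coev_zigzag by blast
qed

lemma projective_tensor_right:
  assumes P: "projective H P" "wf_amod H P" and Y: "is_mod H Y"
  shows "projective H (tensor H P Y)"
  unfolding projective_def
proof (intro allI impI, elim conjE)
  fix N Q g f assume N: "is_mod H N" and Q: "is_mod H Q" and g: "hom H N Q g" "surj_mat g"
    and f: "hom H (tensor H P Y) Q f"
  let ?p = "fst P" and ?y = "fst Y" and ?n = "fst N" and ?Yd = "dual H Y"
  have wf[simp]: "wf_amod H P" "wf_amod H Y" "wf_amod H N" "wf_amod H Q"
    using P(2) Y N Q by (simp_all add: is_mod_imp_wf_amod)
  \<comment> \<open>\<open>f'\<close> corresponds to \<open>f\<close> under \<open>Hom(P \<otimes> Y, Q) \<cong> Hom(P, Q \<otimes> Y\<^sup>*)\<close>; its lift \<open>h'\<close> is transported back.\<close>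
  define f' where "f' = kron f (1\<^sub>m ?y) * kron (1\<^sub>m ?p) (coev ?y)"
  have "hom H (tensor H P (triv_amod H)) (tensor H P (tensor H Y ?Yd)) (kron (1\<^sub>m ?p) (coev ?y))"
    by (simp add: hom_tensor_kron coev_hom[OF Y] hom_id)
  then have "hom H P (tensor H (tensor H P Y) ?Yd) (kron (1\<^sub>m ?p) (coev ?y))"
    using hom_same_amod_left[OF tensor_triv_right] hom_same_amod_right[OF tensor_assoc] by simp
  then have "hom H P (tensor H Q ?Yd) f'"
    unfolding f'_def by (rule hom_comp[OF _ hom_tensor_kron[OF f hom_id[of H ?Yd, simplified]]]) simp_all
  moreover have "hom H (tensor H N ?Yd) (tensor H Q ?Yd) (kron g (1\<^sub>m ?y))"
    using hom_tensor_kron[OF g(1) hom_id[of H ?Yd, simplified]] by simp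
  ultimately obtain h' where h': "hom H P (tensor H N ?Yd) h'" "kron g (1\<^sub>m ?y) * h' = f'"
    using P(1) is_mod_tensor[OF N is_mod_dual[OF Y]] is_mod_tensor[OF Q is_mod_dual[OF Y]] surj_mat_kron_one[OF g(2)]
    unfolding projective_def by blast
  define h where "h = kron (1\<^sub>m ?n) (ev ?y) * kron h' (1\<^sub>m ?y)"
  have "hom H (tensor H P Y) (tensor H N (tensor H ?Yd Y)) (kron h' (1\<^sub>m ?y))"
    using hom_tensor_kron[OF h'(1) hom_id] hom_same_amod_right[OF tensor_assoc] by simp
  moreover have "hom H (tensor H N (tensor H ?Yd Y)) (tensor H N (triv_amod H)) (kron (1\<^sub>m ?n) (ev ?y))"
    by (simp add: hom_tensor_kron ev_hom[OF Y] hom_id)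
  then have "hom H (tensor H N (tensor H ?Yd Y)) N (kron (1\<^sub>m ?n) (ev ?y))"
    using hom_same_amod_right[OF tensor_triv_right] by simp
  ultimately have "hom H (tensor H P Y) N h"
    unfolding h_def by (rule hom_comp) simp_all
  moreover have "g * h = f"
    unfolding h_def by (rule kron_ev_lift) (use g f h' in \<open>auto simp: hom_def f'_def\<close>)
  ultimately show "\<exists>h. hom H (tensor H P Y) N h \<and> g * h = f" by blast
qed

end

section \<open>Tensor powers\<close>

lemma iso_tensor_left:
  "iso H B B' \<Longrightarrow> wf_amod H A \<Longrightarrow> wf_amod H B \<Longrightarrow> wf_amod H B' \<Longrightarrow> iso H (tensor H A B) (tensor H A B')"
  by (simp add: iso_tensor iso_refl)

lemma iso_tensor_right:
  "iso H A A' \<Longrightarrow> wf_amod H A \<Longrightarrow> wf_amod H A' \<Longrightarrow> wf_amod H B \<Longrightarrow> iso H (tensor H A B) (tensor H A' B)"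
  by (simp add: iso_tensor iso_refl)

context hopf begin

lemma iso_tensor_assoc:
  "wf_amod H M \<Longrightarrow> wf_amod H N \<Longrightarrow> wf_amod H L \<Longrightarrow>
    iso H (tensor H (tensor H M N) L) (tensor H M (tensor H N L))"
  by (simp add: same_amod_imp_iso tensor_assoc)

lemma is_mod_tpow:
  assumes M: "is_mod H M"
  shows "is_mod H (tpow H M k)"
proof (induction k)
  case 0
  show ?case by (simp add: is_mod_triv)
next
  case (Suc k)
  then show ?case using M by (cases k) (simp_all add: is_mod_tensor)
qed

context
  fixes M :: "'k amod"
  assumes M: "is_mod H M"
begin

lemma wf_amod_tpow[simp]: "wf_amod H (tpow H M k)"
  by (rule is_mod_imp_wf_amod[OF is_mod_tpow[OF M]])

lemmas wf_M[simp] = is_mod_imp_wf_amod[OF M]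

lemma iso_tpow_Suc: "iso H (tpow H M (Suc k)) (tensor H M (tpow H M k))"
proof (cases k)
  case 0
  have "iso H (tensor H M (triv_amod H)) M"
    by (rule same_amod_imp_iso[OF tensor_triv_right]) simp_all
  then show ?thesis using 0 by (simp add: iso_sym)
qed (simp add: iso_refl)

lemma projective_tpow_Suc:
  assumes "projective H M"
  shows "projective H (tpow H M (Suc k))"
  using assms by (cases k) (simp_all add: projective_tensor_right is_mod_tpow[OF M])

context
  assumes commute: "iso H (tensor H M (dual H M)) (tensor H (dual H M) M)"
begin

lemma iso_dual_tpow_commute: "iso H (tensor H (dual H M) (tpow H M k)) (tensor H (tpow H M k) (dual H M))"
proof (induction k)
  case 0
  have "iso H (tensor H (dual H M) (triv_amod H)) (dual H M)"
    by (rule same_amod_imp_iso[OF tensor_triv_right]) simp_all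
  also have "iso H (dual H M) (tensor H (triv_amod H) (dual H M))"
    by (rule iso_sym, rule same_amod_imp_iso[OF tensor_triv_left]) simp_all
  finally show ?case by simp
next
  case (Suc k)
  let ?Md = "dual H M" and ?T = "tpow H M k"
  have "iso H (tensor H ?Md (tpow H M (Suc k))) (tensor H ?Md (tensor H M ?T))"
    by (simp add: iso_tensor_left iso_tpow_Suc)
  also have "iso H \<dots> (tensor H (tensor H ?Md M) ?T)"
    by (simp add: iso_sym iso_tensor_assoc)
  also have "iso H \<dots> (tensor H (tensor H M ?Md) ?T)"
    by (simp add: iso_tensor_right iso_sym commute)
  also have "iso H \<dots> (tensor H M (tensor H ?Md ?T))"
    by (simp add: iso_tensor_assoc)
  also have "iso H \<dots> (tensor H M (tensor H ?T ?Md))"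
    by (simp add: iso_tensor_left Suc.IH)
  also have "iso H \<dots> (tensor H (tensor H M ?T) ?Md)"
    by (simp add: iso_sym iso_tensor_assoc)
  also have "iso H \<dots> (tensor H (tpow H M (Suc k)) ?Md)"
    by (simp add: iso_tensor_right iso_sym iso_tpow_Suc)
  finally show ?case by simp
qed

lemma projective_tpow_descent:
  assumes "projective H (tpow H M (Suc (Suc k)))"
  shows "projective H (tpow H M (Suc k))"
proof -
  let ?Md = "dual H M" and ?T = "tpow H M k" and ?T1 = "tpow H M (Suc k)"
  have "iso H ?T1 (tensor H M ?T)"
    by (rule iso_tpow_Suc)
  also have "retract H \<dots> (tensor H (tensor H M (tensor H ?Md M)) ?T)"
    by (simp add: retract_tensor retract_tensor_dual_tensor[OF M] iso_imp_retract iso_refl)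
  also have "iso H \<dots> (tensor H M (tensor H (tensor H ?Md M) ?T))"
    by (simp add: iso_tensor_assoc)
  also have "iso H \<dots> (tensor H M (tensor H ?Md (tensor H M ?T)))"
    by (simp add: iso_tensor_left iso_tensor_assoc)
  also have "iso H \<dots> (tensor H M (tensor H ?Md ?T1))"
    by (simp add: iso_tensor_left iso_sym iso_tpow_Suc)
  also have "iso H \<dots> (tensor H M (tensor H ?T1 ?Md))"
    by (simp add: iso_tensor_left iso_dual_tpow_commute)
  also have "iso H \<dots> (tensor H (tensor H M ?T1) ?Md)"
    by (simp add: iso_sym iso_tensor_assoc)
  finally have "retract H ?T1 (tensor H (tpow H M (Suc (Suc k))) ?Md)"
    by simp
  moreover have "projective H (tensor H (tpow H M (Suc (Suc k))) ?Md)"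
    using assms by (simp add: projective_tensor_right is_mod_dual[OF M])
  ultimately show ?thesis
    by (simp add: projective_retract)
qed

lemma projective_tpow_down:
  "projective H (tpow H M (Suc (k + j))) \<Longrightarrow> projective H (tpow H M (Suc k))"
proof (induction j arbitrary: k)
  case (Suc j)
  then show ?case using projective_tpow_descent[of k] Suc.IH[of "Suc k"] by simp
qed simp

lemma projective_iff_projective_tpow:
  assumes "n > 0"
  shows "projective H M \<longleftrightarrow> projective H (tpow H M n)"
proof -
  obtain j where n: "n = Suc (0 + j)" using assms by (cases n) auto
  show ?thesis
    unfolding n using projective_tpow_Suc[of j] projective_tpow_down[of 0 j] by auto
qed

end

end

end

theorem theorem5p1:
  fixes H :: "'k::field hopf_data" and M :: "'k amod" and n :: nat
  assumes "hopf_algebra H"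
    and "n > 0"
    and "is_mod H M"
    and "iso H (tensor H M (dual H M)) (tensor H (dual H M) M)"
  shows "projective H M \<longleftrightarrow> projective H (tpow H M n)"
proof -
  interpret hopf H by (rule hopf.intro[OF assms(1)])
  show ?thesis by (rule projective_iff_projective_tpow[OF assms(3,4,2)])
qed

end
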